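(* Consider the following conditions on $f$ and the auxiliary flow $\Phi$: (a-1) for every set $B$ closed and bounded in $D$, the restriction $f|_B$ is proper; (a-2) $f$ is a local $C^1$ diffeomorphism and $\sup_{x\in B}\|f'(x)^{-1}\|<+\infty$ for every set $B$ closed and bounded in $D$; (b) for every set $B$ closed and bounded in $D$ and every $x\in B$, the connected components of $f^{-1}([f(x_0);f(x)])\cap B$ are compact, where $[f(x_0);f(x)]\subseteq Y$ is the line segment from $f(x_0)$ to $f(x)$; (c) for every set $B$ closed and bounded in $D$ and every $x\in B$, if $\Phi(x,t)\in B$ for all $t>0$ with $(x,t)\in D_\Phi$, then the trajectory through $x$ is global in the future. Then (a-1) implies (b), (a-2) implies (b), and (b) implies (c). Moreover, if $X$ is finite dimensional then (a-1), (b) and (c) hold, and (a-2) holds as well whenever $f$ is a local $C^1$ diffeomorphism.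
   Context: Standing setting: $X,Y$ are real Banach spaces, $D\subseteq X$ is a nonempty open connected set, $f:D\to Y$ is a local homeomorphism (every point has an open neighbourhood mapped homeomorphically onto an open set), $x_0\in D$, $y_0=f(x_0)$. A flow in $D$ is a map $\Phi:D_\Phi\to D$ such that: (i) $D_\Phi$ is an open subset of $D\times\mathbb R$ and $\Phi$ is continuous; (ii) for each $x\in D$, $\{t:(x,t)\in D_\Phi\}$ is an interval containing $0$; (iii) $\Phi(x,0)=x$; (iv) if $(x,t_1),(x,t_1+t_2)\in D_\Phi$ then $(\Phi(x,t_1),t_2)\in D_\Phi$ and $\Phi(\Phi(x,t_1),t_2)=\Phi(x,t_1+t_2)$. The trajectory through $x$ is global in the future if $\{x\}\times[0,+\infty)\subseteq D_\Phi$. Let $\Psi(y,t)=y_0+e^{-t}(y-y_0)$ for $y\in Y,t\in\mathbb R$. The auxiliary flow $\Phi$ is the unique flow in $D$ of maximal domain with $f(\Phi(x,t))=\Psi(f(x),t)$ for all $(x,t)\in D_\Phi$; for each $x$, $t\mapsto\Phi(x,t)$ is the maximal continuous lifting by $f$ of $t\mapsto\Psi(f(x),t)$ through $x$ at $t=0$. A set $B\subseteq D$ is bounded in $D$ if it is bounded in $X$ and its closure in $X$ is contained in $D$. A map is proper if inverse images of compact sets are compact. $f$ is a local $C^1$ diffeomorphism if it is $C^1$ and each point has an open neighbourhood mapped homeomorphically onto an open set with $C^1$ inverse. *)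

theory Defs
  imports "HOL-Analysis.Analysis"
begin

definition local_homeo :: "'a::topological_space set \<Rightarrow> ('a \<Rightarrow> 'b::topological_space) \<Rightarrow> bool" where
  "local_homeo D f \<longleftrightarrow>
     (\<forall>x\<in>D. \<exists>U. x \<in> U \<and> open U \<and> U \<subseteq> D \<and> open (f ` U) \<and>
                 (\<exists>g. homeomorphism U (f ` U) f g))"

definition C1_on :: "'a::real_normed_vector set \<Rightarrow> ('a \<Rightarrow> 'b::real_normed_vector) \<Rightarrow> bool" where
  "C1_on S f \<longleftrightarrow>
     (\<exists>f' :: 'a \<Rightarrow> ('a \<Rightarrow>\<^sub>L 'b). (\<forall>x\<in>S. (f has_derivative blinfun_apply (f' x)) (at x))
                               \<and> continuous_on S f')"

definition local_C1_diffeo :: "'a::real_normed_vector set \<Rightarrow> ('a \<Rightarrow> 'b::real_normed_vector) \<Rightarrow> bool" where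
  "local_C1_diffeo D f \<longleftrightarrow> C1_on D f \<and>
     (\<forall>x\<in>D. \<exists>U. x \<in> U \<and> open U \<and> U \<subseteq> D \<and> open (f ` U) \<and>
                 (\<exists>g. homeomorphism U (f ` U) f g \<and> C1_on (f ` U) g))"

definition bounded_in :: "'a::real_normed_vector set \<Rightarrow> 'a set \<Rightarrow> bool" where
  "bounded_in D B \<longleftrightarrow> bounded B \<and> closure B \<subseteq> D"

definition proper_on :: "'a::topological_space set \<Rightarrow> ('a \<Rightarrow> 'b::topological_space) \<Rightarrow> bool" where
  "proper_on B f \<longleftrightarrow> (\<forall>K. compact K \<longrightarrow> compact {x\<in>B. f x \<in> K})"

definition Psi :: "'b::real_normed_vector \<Rightarrow> 'b \<Rightarrow> real \<Rightarrow> 'b" where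
  "Psi y0 y t = y0 + exp (- t) *\<^sub>R (y - y0)"

definition is_lift :: "'a::real_normed_vector set \<Rightarrow> ('a \<Rightarrow> 'b::real_normed_vector) \<Rightarrow> 'b \<Rightarrow> 'a
     \<Rightarrow> real set \<Rightarrow> (real \<Rightarrow> 'a) \<Rightarrow> bool" where
  "is_lift D f y0 x J \<gamma> \<longleftrightarrow> is_interval J \<and> 0 \<in> J \<and> continuous_on J \<gamma> \<and> \<gamma> ` J \<subseteq> D \<and>
      \<gamma> 0 = x \<and> (\<forall>t\<in>J. f (\<gamma> t) = Psi y0 (f x) t)"

text \<open>Time domain {t. (x,t) in D_Phi} of the maximal lifting (auxiliary flow).\<close>
definition aux_dom :: "'a::real_normed_vector set \<Rightarrow> ('a \<Rightarrow> 'b::real_normed_vector) \<Rightarrow> 'b \<Rightarrow> 'a \<Rightarrow> real set" where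
  "aux_dom D f y0 x = \<Union>{J. \<exists>\<gamma>. is_lift D f y0 x J \<gamma>}"

text \<open>Auxiliary flow Phi(x,t): value at t of the (unique) maximal lifting.\<close>
definition aux_flow :: "'a::real_normed_vector set \<Rightarrow> ('a \<Rightarrow> 'b::real_normed_vector) \<Rightarrow> 'b \<Rightarrow> 'a \<Rightarrow> real \<Rightarrow> 'a" where
  "aux_flow D f y0 x t = (SOME p. \<exists>J \<gamma>. is_lift D f y0 x J \<gamma> \<and> t \<in> J \<and> p = \<gamma> t)"

definition cond_a1 :: "'a::real_normed_vector set \<Rightarrow> ('a \<Rightarrow> 'b::real_normed_vector) \<Rightarrow> bool" where
  "cond_a1 D f \<longleftrightarrow> (\<forall>B. closed B \<and> bounded_in D B \<longrightarrow> proper_on B f)"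

definition cond_a2 :: "'a::real_normed_vector set \<Rightarrow> ('a \<Rightarrow> 'b::real_normed_vector) \<Rightarrow> bool" where
  "cond_a2 D f \<longleftrightarrow> local_C1_diffeo D f \<and>
     (\<forall>B. closed B \<and> bounded_in D B \<longrightarrow>
        bdd_above ((\<lambda>x. onorm (inv (frechet_derivative f (at x)))) ` B))"

definition cond_b :: "'a::real_normed_vector set \<Rightarrow> ('a \<Rightarrow> 'b::real_normed_vector) \<Rightarrow> 'a \<Rightarrow> bool" where
  "cond_b D f x0 \<longleftrightarrow> (\<forall>B. closed B \<and> bounded_in D B \<longrightarrow>
     (\<forall>x\<in>B. \<forall>C \<in> components {z\<in>B. f z \<in> closed_segment (f x0) (f x)}. compact C))"

definition cond_c :: "'a::real_normed_vector set \<Rightarrow> ('a \<Rightarrow> 'b::real_normed_vector) \<Rightarrow> 'a \<Rightarrow> bool" where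
  "cond_c D f x0 \<longleftrightarrow> (\<forall>B. closed B \<and> bounded_in D B \<longrightarrow>
     (\<forall>x\<in>B. (\<forall>t>0. t \<in> aux_dom D f (f x0) x \<longrightarrow> aux_flow D f (f x0) x t \<in> B)
              \<longrightarrow> {0..} \<subseteq> aux_dom D f (f x0) x))"

end

theory Submission
  imports Defs
begin

text \<open>
  (a1) implies (b) because \<open>f\<^sup>-\<^sup>1[f(x\<^sub>0); f(x)] \<inter> B\<close> is itself compact.
  For (a2) implies (b), the bound on \<open>\<parallel>f'(x)\<^sup>-\<^sup>1\<parallel>\<close> makes every lifting of the segment inside \<open>B\<close>
  Lipschitz, so the maximal lifting through a point \<open>q\<close> in both directions lives on a closed
  interval and has compact image.  Slight extensions of it leave \<open>B\<close> at both ends, and a tubular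
  neighbourhood on which \<open>f\<close> is injective along the extension shows that this image is relatively
  clopen in \<open>f\<^sup>-\<^sup>1[f(x\<^sub>0); f(x)] \<inter> B\<close>; so it contains the component of \<open>q\<close>.
  For (b) implies (c), a trajectory that stays in \<open>B\<close> stays in the compact component of \<open>x\<close>; if its
  domain ended at some \<open>T\<close>, an accumulation point of \<open>\<Phi>(x,t)\<close> as \<open>t \<rightarrow> T\<close> lies over \<open>\<Psi>(f(x),T)\<close>, and
  a local inverse of \<open>f\<close> there continues the trajectory beyond \<open>T\<close>.
  In finite dimension, closed bounded sets are compact; this gives (a1) and, by continuity of
  \<open>x \<mapsto> \<parallel>f'(x)\<^sup>-\<^sup>1\<parallel>\<close>, (a2).
\<close>

section \<open>Closed bounded sets in finite dimension\<close>

definition bounded_seq_compact :: "'a::metric_space set \<Rightarrow> bool" where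
  "bounded_seq_compact S \<longleftrightarrow> (\<forall>x. range x \<subseteq> S \<and> bounded (range x) \<longrightarrow>
     (\<exists>l\<in>S. \<exists>r::nat \<Rightarrow> nat. strict_mono r \<and> (x \<circ> r) \<longlonglongrightarrow> l))"

lemma bounded_seq_compact_imp_closed:
  assumes "bounded_seq_compact S"
  shows "closed S"
  unfolding closed_sequential_limits
proof (intro allI impI, elim conjE)
  fix y l assume y: "\<forall>n. y n \<in> S" "y \<longlonglongrightarrow> l"
  then obtain l' r where "l' \<in> S" "strict_mono r" "(y \<circ> r) \<longlonglongrightarrow> l'"
    using assms convergent_imp_bounded unfolding bounded_seq_compact_def by blast
  then show "l \<in> S"
    using LIMSEQ_subseq_LIMSEQ[OF y(2)] LIMSEQ_unique by metis
qed

lemma abs_scaleR_infdist_le_norm: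
  fixes a x :: "'a::real_normed_vector"
  assumes "subspace S" "x - c *\<^sub>R a \<in> S"
  shows "\<bar>c\<bar> * infdist a S \<le> norm x"
proof (cases "c = 0")
  case False
  have "inverse c *\<^sub>R - (x - c *\<^sub>R a) \<in> S"
    using assms by (intro subspace_scale subspace_neg)
  then have "infdist a S \<le> dist a (inverse c *\<^sub>R - (x - c *\<^sub>R a))"
    by (rule infdist_le)
  also have "\<dots> = norm x / \<bar>c\<bar>"
    using False by (simp add: dist_norm algebra_simps divide_inverse)
  finally show ?thesis
    using False by (simp add: field_simps)
qed simp

text \<open>The point \<open>a\<close> has positive distance from the closed subspace \<open>span T\<close>; this bounds the
  \<open>a\<close>-coefficients of a bounded sequence in \<open>span (insert a T)\<close>.\<close>

lemma bounded_seq_compact_span_insert: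
  fixes a :: "'a::real_normed_vector"
  assumes "bounded_seq_compact (span T)"
  shows "bounded_seq_compact (span (insert a T))"
proof (cases "a \<in> span T")
  case True
  then show ?thesis using assms by (simp add: span_redundant)
next
  case False
  have "infdist a (span T) > 0"
    using False bounded_seq_compact_imp_closed[OF assms] in_closed_iff_infdist_zero[of "span T" a]
      infdist_nonneg[of a] by (metis less_eq_real_def span_zero empty_iff)
  show ?thesis
    unfolding bounded_seq_compact_def
  proof (intro allI impI, elim conjE)
    fix x :: "nat \<Rightarrow> 'a" assume x: "range x \<subseteq> span (insert a T)" "bounded (range x)"
    obtain K where K: "\<And>n. norm (x n) \<le> K"
      using x(2) by (meson bounded_iff rangeI)
    have "\<forall>n. \<exists>c. x n - c *\<^sub>R a \<in> span T"
      using x(1) span_breakdown_eq by blast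
    then obtain c where c: "\<And>n. x n - c n *\<^sub>R a \<in> span T" by metis
    have "\<bar>c n\<bar> \<le> K / infdist a (span T)" for n
      using abs_scaleR_infdist_le_norm[OF subspace_span c[of n]] K[of n] \<open>infdist a (span T) > 0\<close>
      by (simp add: field_simps)
    then have "bounded (range c)"
      unfolding bounded_iff by auto
    then obtain r1 cl where r1: "strict_mono r1" "(c \<circ> r1) \<longlonglongrightarrow> cl"
      using bounded_imp_convergent_subsequence by blast
    define t where "t n = x (r1 n) - c (r1 n) *\<^sub>R a" for n
    have "(\<lambda>n. c (r1 n) *\<^sub>R a) \<longlonglongrightarrow> cl *\<^sub>R a"
      using r1(2) by (intro tendsto_intros) (simp add: o_def)
    then have "bounded (range (\<lambda>n. c (r1 n) *\<^sub>R a))"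
      by (rule convergent_imp_bounded)
    moreover have "bounded (range (\<lambda>n. x (r1 n)))"
      using x(2) by (rule bounded_subset) auto
    ultimately have "bounded (range t)"
      unfolding t_def by (rule bounded_minus_comp[rotated])
    moreover have "range t \<subseteq> span T"
      using c by (auto simp: t_def)
    ultimately obtain lt r2 where r2: "lt \<in> span T" "strict_mono r2" "(t \<circ> r2) \<longlonglongrightarrow> lt"
      using assms unfolding bounded_seq_compact_def by blast
    have "(\<lambda>n. t (r2 n) + c (r1 (r2 n)) *\<^sub>R a) \<longlonglongrightarrow> lt + cl *\<^sub>R a"
      using r2(3) LIMSEQ_subseq_LIMSEQ[OF r1(2) r2(2)]
      by (intro tendsto_intros) (auto simp: o_def)
    then have "(x \<circ> (r1 \<circ> r2)) \<longlonglongrightarrow> lt + cl *\<^sub>R a"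
      by (simp add: t_def o_def)
    moreover have "lt + cl *\<^sub>R a \<in> span (insert a T)"
      using r2(1) by (meson span_add span_base span_mono span_scale insertI1 subset_insertI subsetD)
    ultimately show "\<exists>l\<in>span (insert a T). \<exists>r::nat \<Rightarrow> nat. strict_mono r \<and> (x \<circ> r) \<longlonglongrightarrow> l"
      using strict_mono_o[OF r1(1) r2(2)] by blast
  qed
qed

lemma finite_span_bounded_seq_compact:
  fixes T :: "'a::real_normed_vector set"
  assumes "finite T"
  shows "bounded_seq_compact (span T)"
  using assms
proof (induction T rule: finite_induct)
  case empty
  have "(x \<circ> id) \<longlonglongrightarrow> 0" if "range x \<subseteq> span {}" for x :: "nat \<Rightarrow> 'a"
    using that by (simp add: o_def image_subset_iff)
  then show ?case
    unfolding bounded_seq_compact_def using strict_mono_id by (meson span_zero)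
qed (rule bounded_seq_compact_span_insert)

lemma finite_span_bounded_closed_imp_compact:
  fixes B S :: "'a::real_normed_vector set"
  assumes "finite S" "span S = UNIV" "bounded B" "closed B"
  shows "compact B"
  unfolding compact_eq_seq_compact_metric seq_compact_def
proof (intro allI impI)
  fix x :: "nat \<Rightarrow> 'a" assume x: "\<forall>n. x n \<in> B"
  then have "bounded (range x)"
    using assms(3) by (meson bounded_subset image_subsetI)
  then obtain l r where "strict_mono r" "(x \<circ> r) \<longlonglongrightarrow> l"
    using finite_span_bounded_seq_compact[OF assms(1)] assms(2)
    unfolding bounded_seq_compact_def by blast
  moreover have "l \<in> B"
    using closed_sequentially[OF assms(4)] x calculation by (metis comp_apply)
  ultimately show "\<exists>l\<in>B. \<exists>r. strict_mono r \<and> (x \<circ> r) \<longlonglongrightarrow> l" by blast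
qed

section \<open>Liftings of paths through a local homeomorphism\<close>

definition is_lifting ::
    "('a::real_normed_vector \<Rightarrow> 'b) \<Rightarrow> 'a set \<Rightarrow> (real \<Rightarrow> 'b) \<Rightarrow> real set \<Rightarrow> (real \<Rightarrow> 'a) \<Rightarrow> bool" where
  "is_lifting f E \<sigma> J \<gamma> \<longleftrightarrow>
     is_interval J \<and> continuous_on J \<gamma> \<and> \<gamma> ` J \<subseteq> E \<and> (\<forall>t\<in>J. f (\<gamma> t) = \<sigma> t)"

definition locally_inj_on :: "('a::topological_space \<Rightarrow> 'b) \<Rightarrow> 'a set \<Rightarrow> bool" where
  "locally_inj_on f E \<longleftrightarrow> (\<forall>x\<in>E. \<exists>U. x \<in> U \<and> open U \<and> inj_on f U)"

lemma local_homeo_imp_locally_inj_on: "local_homeo D f \<Longrightarrow> locally_inj_on f D"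
  unfolding local_homeo_def locally_inj_on_def homeomorphism_def
  by (metis inj_on_inverseI)

lemma local_homeo_imp_continuous_on:
  fixes f :: "'a::t2_space \<Rightarrow> 'b::topological_space"
  assumes "local_homeo D f" "open D"
  shows "continuous_on D f"
proof -
  have "isCont f p" if "p \<in> D" for p
  proof -
    obtain U g where "p \<in> U" "open U" "homeomorphism U (f ` U) f g"
      using assms(1) \<open>p \<in> D\<close> unfolding local_homeo_def by blast
    then show ?thesis
      using homeomorphism_cont1 continuous_on_eq_continuous_at by blast
  qed
  then show ?thesis
    using assms(2) by (simp add: continuous_on_eq_continuous_at)
qed

lemma is_lifting_unique:
  assumes inj: "locally_inj_on f E"
    and l1: "is_lifting f E \<sigma> J1 \<gamma>1" and l2: "is_lifting f E \<sigma> J2 \<gamma>2"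
    and s: "s \<in> J1" "s \<in> J2" "\<gamma>1 s = \<gamma>2 s" and t: "t \<in> J1" "t \<in> J2"
  shows "\<gamma>1 t = \<gamma>2 t"
proof -
  \<comment> \<open>The set where the two liftings agree is clopen in the interval \<open>J1 \<inter> J2\<close>.\<close>
  let ?I = "J1 \<inter> J2"
  let ?S = "{u\<in>?I. \<gamma>1 u - \<gamma>2 u = 0}"
  have "connected ?I"
    using l1 l2 unfolding is_lifting_def by (intro is_interval_connected is_interval_Int) auto
  have c1: "continuous_on ?I \<gamma>1" and c2: "continuous_on ?I \<gamma>2"
    using l1 l2 unfolding is_lifting_def by (auto intro: continuous_on_subset)
  have "closedin (top_of_set ?I) ?S"
    by (intro continuous_closedin_preimage_constant continuous_intros c1 c2)
  moreover have "openin (top_of_set ?I) ?S"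
    unfolding openin_euclidean_subtopology_iff
  proof (intro conjI ballI)
    fix u assume u: "u \<in> ?S"
    then obtain U where U: "\<gamma>1 u \<in> U" "open U" "inj_on f U"
      using l1 inj unfolding is_lifting_def locally_inj_on_def by blast
    then obtain e where "e > 0" "ball (\<gamma>1 u) e \<subseteq> U" by (meson openE)
    moreover obtain d1 where "d1 > 0" "\<forall>u'\<in>?I. dist u' u < d1 \<longrightarrow> dist (\<gamma>1 u') (\<gamma>1 u) < e"
      using c1 u \<open>e > 0\<close> unfolding continuous_on_iff by blast
    moreover obtain d2 where "d2 > 0" "\<forall>u'\<in>?I. dist u' u < d2 \<longrightarrow> dist (\<gamma>2 u') (\<gamma>2 u) < e"
      using c2 u \<open>e > 0\<close> unfolding continuous_on_iff by blast
    ultimately have "\<gamma>1 u' \<in> U \<and> \<gamma>2 u' \<in> U" if "u' \<in> ?I" "dist u' u < min d1 d2" for u'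
      using that u by (auto simp: dist_commute subset_iff)
    moreover have "f (\<gamma>1 u') = f (\<gamma>2 u')" if "u' \<in> ?I" for u'
      using l1 l2 that unfolding is_lifting_def by auto
    ultimately have "\<gamma>1 u' = \<gamma>2 u'" if "u' \<in> ?I" "dist u' u < min d1 d2" for u'
      using that U(3) by (meson inj_onD)
    then have "u' \<in> ?S" if "u' \<in> ?I" "dist u' u < min d1 d2" for u'
      using that by simp
    then show "\<exists>e>0. \<forall>u'\<in>?I. dist u' u < e \<longrightarrow> u' \<in> ?S"
      using \<open>d1 > 0\<close> \<open>d2 > 0\<close> by (metis min_less_iff_conj)
  qed auto
  moreover have "?S \<noteq> {}" using s by auto
  ultimately have "?S = ?I"
    using \<open>connected ?I\<close> unfolding connected_clopen by blast
  then show ?thesis using t by auto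
qed

lemma is_lifting_subset:
  "is_lifting f E \<sigma> J \<gamma> \<Longrightarrow> J' \<subseteq> J \<Longrightarrow> is_interval J' \<Longrightarrow> is_lifting f E \<sigma> J' \<gamma>"
  unfolding is_lifting_def by (auto intro: continuous_on_subset)

lemma is_lifting_mono: "is_lifting f E \<sigma> J \<gamma> \<Longrightarrow> E \<subseteq> E' \<Longrightarrow> is_lifting f E' \<sigma> J \<gamma>"
  unfolding is_lifting_def by auto

lemma is_lifting_glue:
  assumes l1: "is_lifting f E \<sigma> {a..t} \<gamma>1" and l2: "is_lifting f E \<sigma> {t..b} \<gamma>2"
    and "\<gamma>1 t = \<gamma>2 t" "a \<le> t" "t \<le> b"
  shows "is_lifting f E \<sigma> {a..b} (\<lambda>s. if s \<le> t then \<gamma>1 s else \<gamma>2 s)"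
proof -
  let ?\<gamma> = "\<lambda>s. if s \<le> t then \<gamma>1 s else \<gamma>2 s"
  have "continuous_on {a..t} ?\<gamma>"
    using l1 unfolding is_lifting_def by (auto intro: continuous_on_eq)
  moreover have "continuous_on {t..b} ?\<gamma>"
  proof (rule continuous_on_eq)
    show "continuous_on {t..b} \<gamma>2" using l2 unfolding is_lifting_def by blast
  qed (use assms(3) in auto)
  ultimately have "continuous_on ({a..t} \<union> {t..b}) ?\<gamma>"
    by (intro continuous_on_closed_Un) auto
  moreover have "{a..t} \<union> {t..b} = {a..b}" using assms(4,5) by auto
  ultimately show ?thesis
    using l1 l2 unfolding is_lifting_def by (auto simp: is_interval_cc)
qed

lemma is_lifting_local_inverse:
  assumes "homeomorphism U (f ` U) f g" "U \<subseteq> E"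
    and "continuous_on J \<sigma>" "\<sigma> ` J \<subseteq> f ` U" "is_interval J"
  shows "is_lifting f E \<sigma> J (g \<circ> \<sigma>)"
proof -
  have "continuous_on J (g \<circ> \<sigma>)"
    using assms(1,3,4) by (meson continuous_on_compose continuous_on_subset homeomorphism_def)
  moreover have "g (\<sigma> t) \<in> U" "f (g (\<sigma> t)) = \<sigma> t" if "t \<in> J" for t
    using assms(1,4) that unfolding homeomorphism_def by auto
  ultimately show ?thesis
    using assms(2,5) unfolding is_lifting_def by auto
qed

lemma is_lifting_reparametrize:
  assumes "is_lifting f E \<sigma> J \<gamma>" "continuous_on J' \<phi>" "\<phi> ` J' \<subseteq> J" "is_interval J'"
    and "\<And>s. s \<in> J' \<Longrightarrow> \<sigma>' s = \<sigma> (\<phi> s)"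
  shows "is_lifting f E \<sigma>' J' (\<gamma> \<circ> \<phi>)"
  using assms continuous_on_compose2[of J \<gamma> J' \<phi>] unfolding is_lifting_def by auto

text \<open>A local inverse of \<open>f\<close> near \<open>p\<close> lifts \<open>\<sigma>\<close> on a whole neighbourhood of \<open>T\<close>; glued to a
  lifting whose endpoint is already close to \<open>p\<close>, it continues that lifting beyond \<open>T\<close>.\<close>

lemma is_lifting_extend_at_limit:
  fixes f :: "'a::real_normed_vector \<Rightarrow> 'b::real_normed_vector" and \<sigma> :: "real \<Rightarrow> 'b"
  assumes lh: "local_homeo D f" and oD: "open D" and c\<sigma>: "continuous_on UNIV \<sigma>"
    and lifts: "\<And>n. is_lifting f D \<sigma> {a..t n} (\<gamma> n)"
    and t: "\<And>n. a \<le> t n" "\<And>n. t n \<le> T" "t \<longlonglongrightarrow> T"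
    and p: "(\<lambda>n. \<gamma> n (t n)) \<longlonglongrightarrow> p" "p \<in> D"
  obtains n \<delta> \<phi> where "\<delta> > 0" "is_lifting f D \<sigma> {a..T + \<delta>} \<phi>"
    "\<forall>s\<in>{a..t n}. \<phi> s = \<gamma> n s" "\<phi> T = p"
proof -
  have "isCont f p"
    using local_homeo_imp_continuous_on[OF lh oD] oD p(2) by (simp add: continuous_on_eq_continuous_at)
  then have "(\<lambda>n. f (\<gamma> n (t n))) \<longlonglongrightarrow> f p"
    using p(1) by (rule isCont_tendsto_compose[where g=f and l=p])
  moreover have "f (\<gamma> n (t n)) = \<sigma> (t n)" for n
    using lifts[of n] t(1)[of n] unfolding is_lifting_def by auto
  moreover have "(\<lambda>n. \<sigma> (t n)) \<longlonglongrightarrow> \<sigma> T"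
    using c\<sigma> t(3) by (simp add: continuous_on_eq_continuous_at isCont_tendsto_compose[where g=\<sigma>])
  ultimately have fp: "f p = \<sigma> T"
    using LIMSEQ_unique by simp
  obtain U g where U: "p \<in> U" "U \<subseteq> D" "open (f ` U)" "open U" and g: "homeomorphism U (f ` U) f g"
    using lh p(2) unfolding local_homeo_def by blast
  have "\<sigma> T \<in> f ` U" using U(1) fp by (metis imageI)
  then obtain e where "e > 0" "ball (\<sigma> T) e \<subseteq> f ` U"
    using U(3) openE by blast
  moreover obtain \<delta>0 where "\<delta>0 > 0" "\<forall>s. dist s T < \<delta>0 \<longrightarrow> dist (\<sigma> s) (\<sigma> T) < e"
    using c\<sigma> \<open>e > 0\<close> unfolding continuous_on_iff by blast
  ultimately have \<sigma>U: "\<sigma> s \<in> f ` U" if "dist s T < \<delta>0" for s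
    using that by (auto simp: dist_commute subset_iff)
  define \<delta> where "\<delta> = \<delta>0 / 2"
  have "\<forall>\<^sub>F n in sequentially. \<gamma> n (t n) \<in> U"
    using p(1) U(1,4) topological_tendstoD by blast
  moreover have "\<forall>\<^sub>F n in sequentially. T - \<delta> < t n"
    using t(3) \<open>\<delta>0 > 0\<close> unfolding \<delta>_def by (intro order_tendstoD) auto
  ultimately have "\<forall>\<^sub>F n in sequentially. \<gamma> n (t n) \<in> U \<and> T - \<delta> < t n"
    by (rule eventually_conj)
  then obtain n where n: "\<gamma> n (t n) \<in> U" "T - \<delta> < t n"
    using eventually_happens'[OF sequentially_bot] by blast
  have chart: "is_lifting f D \<sigma> {t n..T + \<delta>} (g \<circ> \<sigma>)"
    using t(2)[of n] n(2) \<open>\<delta>0 > 0\<close> unfolding \<delta>_def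
    by (intro is_lifting_local_inverse[OF g U(2) continuous_on_subset[OF c\<sigma>]] image_subsetI \<sigma>U)
       (auto simp: dist_real_def)
  have junction: "\<gamma> n (t n) = (g \<circ> \<sigma>) (t n)"
    using lifts[of n] t(1)[of n] homeomorphism_apply1[OF g n(1)] unfolding is_lifting_def by auto
  have glued: "is_lifting f D \<sigma> {a..T + \<delta>} (\<lambda>s. if s \<le> t n then \<gamma> n s else (g \<circ> \<sigma>) s)"
    by (rule is_lifting_glue[OF lifts[of n] chart junction t(1)])
       (use t(2)[of n] \<open>\<delta>0 > 0\<close> in \<open>simp add: \<delta>_def\<close>)
  have "g (\<sigma> T) = p"
    using homeomorphism_apply1[OF g U(1)] fp by simp
  then have "(\<lambda>s. if s \<le> t n then \<gamma> n s else (g \<circ> \<sigma>) s) T = p"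
    using junction t(2)[of n] by (cases "t n = T") auto
  moreover have "\<forall>s\<in>{a..t n}. (\<lambda>s. if s \<le> t n then \<gamma> n s else (g \<circ> \<sigma>) s) s = \<gamma> n s"
    by simp
  ultimately show ?thesis
    using that[OF _ glued, where n=n] \<open>\<delta>0 > 0\<close> unfolding \<delta>_def by simp
qed

lemma locally_inj_on_constant_on_connected:
  fixes f :: "'a::t1_space \<Rightarrow> 'b"
  assumes "locally_inj_on f E" "connected C" "C \<subseteq> E" "q \<in> C" "\<And>z. z \<in> C \<Longrightarrow> f z = f q"
  shows "C = {q}"
proof -
  obtain U where U: "q \<in> U" "open U" "inj_on f U"
    using assms(1,3,4) unfolding locally_inj_on_def by blast
  have "C \<inter> U \<subseteq> {q}"
    using U assms(4,5) by (auto dest: inj_onD)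
  then have "C \<inter> U \<inter> - {q} = {}" "C \<subseteq> U \<union> - {q}"
    using U(1) by auto
  then have "U \<inter> C = {} \<or> - {q} \<inter> C = {}"
    by (intro connectedD[OF assms(2) U(2)]) (auto simp: open_Compl)
  then have "C \<inter> - {q} = {}"
    using U(1) assms(4) by blast
  then show ?thesis using assms(4) by blast
qed

lemma is_lifting_tubular_neighbourhood:
  fixes f :: "'a::real_normed_vector \<Rightarrow> 'b::real_normed_vector" and h :: "'a \<Rightarrow> real"
  assumes inj: "locally_inj_on f D" and oD: "open D" and ch: "continuous_on D h"
    and \<Phi>: "is_lifting f D \<sigma> {\<alpha>..\<beta>} \<Phi>" and h\<Phi>: "\<And>s. s \<in> {\<alpha>..\<beta>} \<Longrightarrow> h (\<Phi> s) = s"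
  obtains W where "open W" "W \<subseteq> D" "\<Phi> ` {\<alpha>..\<beta>} \<subseteq> W"
    "\<And>z. z \<in> W \<Longrightarrow> f z = \<sigma> (h z) \<Longrightarrow> h z \<in> {\<alpha>..\<beta>} \<Longrightarrow> z = \<Phi> (h z)"
proof -
  have c\<Phi>: "continuous_on {\<alpha>..\<beta>} \<Phi>" and \<Phi>D: "\<Phi> ` {\<alpha>..\<beta>} \<subseteq> D"
    and f\<Phi>: "\<And>s. s \<in> {\<alpha>..\<beta>} \<Longrightarrow> f (\<Phi> s) = \<sigma> s"
    using \<Phi> unfolding is_lifting_def by auto
  define good where "good s V r \<longleftrightarrow> s \<in> {\<alpha>..\<beta>} \<and> open V \<and> inj_on f V \<and> r > 0 \<and>
      (\<forall>s'\<in>{\<alpha>..\<beta>}. dist s' s < r \<longrightarrow> \<Phi> s' \<in> V)" for s V r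
  define W where "W = \<Union>{V \<inter> (h -` ball s r \<inter> D) | s V r. good s V r}"
  have good_exists: "\<exists>V r. good s V r" if s: "s \<in> {\<alpha>..\<beta>}" for s
  proof -
    obtain V where V: "\<Phi> s \<in> V" "open V" "inj_on f V"
      using inj \<Phi>D s unfolding locally_inj_on_def by blast
    then obtain e where "e > 0" "ball (\<Phi> s) e \<subseteq> V" by (meson openE)
    moreover obtain r where "r > 0" "\<forall>s'\<in>{\<alpha>..\<beta>}. dist s' s < r \<longrightarrow> dist (\<Phi> s') (\<Phi> s) < e"
      using c\<Phi> s \<open>e > 0\<close> unfolding continuous_on_iff by blast
    ultimately show ?thesis
      unfolding good_def using V s by (auto simp: dist_commute subset_iff)
  qed
  show ?thesis
  proof (rule that)
    have "open (h -` ball s r \<inter> D)" for s r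
      using continuous_on_open_vimage[OF oD] ch by blast
    then show "open W"
      unfolding W_def good_def by (intro open_Union) auto
    show "W \<subseteq> D" unfolding W_def by blast
    show "\<Phi> ` {\<alpha>..\<beta>} \<subseteq> W"
    proof (rule image_subsetI)
      fix s assume s: "s \<in> {\<alpha>..\<beta>}"
      then obtain V r where "good s V r" using good_exists by blast
      then have "\<Phi> s \<in> V \<inter> (h -` ball s r \<inter> D)"
        using s h\<Phi> \<Phi>D unfolding good_def by auto
      then show "\<Phi> s \<in> W"
        unfolding W_def using \<open>good s V r\<close> by blast
    qed
    fix z assume z: "z \<in> W" "f z = \<sigma> (h z)" "h z \<in> {\<alpha>..\<beta>}"
    then obtain s V r where "good s V r" "z \<in> V" "dist (h z) s < r"
      unfolding W_def by (auto simp: dist_commute)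
    then have "\<Phi> (h z) \<in> V" "inj_on f V" using z(3) unfolding good_def by auto
    moreover have "f (\<Phi> (h z)) = f z" using f\<Phi> z(2,3) by simp
    ultimately show "z = \<Phi> (h z)" using \<open>z \<in> V\<close> by (metis inj_onD)
  qed
qed

lemma connected_component_subset_lifting_image:
  fixes f :: "'a::real_normed_vector \<Rightarrow> 'b::real_normed_vector" and h :: "'a \<Rightarrow> real"
  assumes inj: "locally_inj_on f D" and oD: "open D" and ch: "continuous_on D h"
    and \<Phi>: "is_lifting f D \<sigma> {\<alpha>..\<beta>} \<Phi>" and h\<Phi>: "\<And>s. s \<in> {\<alpha>..\<beta>} \<Longrightarrow> h (\<Phi> s) = s"
    and KB: "K \<subseteq> B" "B \<subseteq> D" and hK: "\<And>z. z \<in> K \<Longrightarrow> f z = \<sigma> (h z) \<and> 0 \<le> h z \<and> h z \<le> 1"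
    and ends: "\<alpha> = 0 \<or> \<Phi> \<alpha> \<notin> B" "\<beta> = 1 \<or> \<Phi> \<beta> \<notin> B"
    and q: "q \<in> K" "q \<in> \<Phi> ` {\<alpha>..\<beta>}"
  shows "connected_component_set K q \<subseteq> \<Phi> ` {\<alpha>..\<beta>}"
proof -
  obtain W where W: "open W" "W \<subseteq> D" "\<Phi> ` {\<alpha>..\<beta>} \<subseteq> W"
    "\<And>z. z \<in> W \<Longrightarrow> f z = \<sigma> (h z) \<Longrightarrow> h z \<in> {\<alpha>..\<beta>} \<Longrightarrow> z = \<Phi> (h z)"
    using is_lifting_tubular_neighbourhood[OF inj oD ch \<Phi> h\<Phi>] by blast
  \<comment> \<open>\<open>K \<inter> \<Phi> ` {\<alpha>..\<beta>}\<close> is clopen in \<open>K\<close>; the bounds \<open>-1\<close> and \<open>2\<close> are no constraint since \<open>h\<close> maps \<open>K\<close> into \<open>[0,1]\<close>.\<close>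
  define lo where "lo = (if \<alpha> = 0 then -1 else \<alpha>)"
  define hi where "hi = (if \<beta> = 1 then 2 else \<beta>)"
  define G where "G = W \<inter> (h -` {lo<..<hi} \<inter> D)"
  define F where "F = \<Phi> ` {\<alpha>..\<beta>}"
  have "open (h -` {lo<..<hi} \<inter> D)"
    using continuous_on_open_vimage[OF oD, of h] ch open_greaterThanLessThan by blast
  then have "open G"
    unfolding G_def using W(1) by (rule open_Int[rotated])
  have "closed F"
    unfolding F_def using \<Phi> unfolding is_lifting_def
    by (intro compact_imp_closed compact_continuous_image) auto
  have GF: "z \<in> F" if "z \<in> K" "z \<in> G" for z
  proof -
    have "\<alpha> \<le> h z" "h z \<le> \<beta>"
      using hK[OF that(1)] that(2) unfolding G_def lo_def hi_def by (auto split: if_splits)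
    moreover have "z = \<Phi> (h z)"
      using W(4) hK[OF that(1)] that(2) calculation unfolding G_def by auto
    ultimately show ?thesis
      unfolding F_def by auto
  qed
  have FG: "z \<in> G" if z: "z \<in> K" "z \<in> F" for z
  proof -
    obtain s where s: "s \<in> {\<alpha>..\<beta>}" "z = \<Phi> s" using z(2) unfolding F_def by blast
    have "z \<in> B" using z(1) KB by blast
    then have "lo < s" "s < hi"
      using s ends unfolding lo_def hi_def by (auto simp: less_le)
    then show ?thesis
      using W(3) KB \<open>z \<in> B\<close> s h\<Phi> unfolding G_def by auto
  qed
  have "q \<in> G"
    using FG q by (simp add: F_def)
  define C where "C = connected_component_set K q"
  have C: "connected C" "C \<subseteq> K" "q \<in> C"
    unfolding C_def using q(1) by (auto simp: connected_component_subset)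
  have "G \<inter> - F \<inter> C = {}" "C \<subseteq> G \<union> - F"
    using GF FG C(2) by blast+
  then have "G \<inter> C = {} \<or> - F \<inter> C = {}"
    by (rule connectedD[OF C(1) \<open>open G\<close> open_Compl[OF \<open>closed F\<close>]])
  then show ?thesis
    using \<open>q \<in> G\<close> C(3) unfolding C_def F_def by blast
qed

section \<open>The auxiliary flow\<close>

lemma tendsto_from_below:
  fixes T :: real
  assumes "0 \<le> T"
  obtains t where "\<And>n. 0 \<le> t n" "\<And>n. t n \<le> T" "\<And>n. t n < T \<or> t n = 0" "t \<longlonglongrightarrow> T"
proof
  define t where "t = (\<lambda>n. T - T / (real n + 2))"
  show "0 \<le> t n" "t n \<le> T" for n
    using assms by (auto simp: t_def field_simps)
  show "t n < T \<or> t n = 0" for n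
  proof (cases "T = 0")
    case False
    then show ?thesis using assms by (simp add: t_def)
  qed (simp add: t_def)
  have "(\<lambda>n. T / (real (n + 2))) \<longlonglongrightarrow> 0"
    using LIMSEQ_ignore_initial_segment[OF lim_const_over_n[of T], of 2] by simp
  then have "(\<lambda>n. T - T / (real n + 2)) \<longlonglongrightarrow> T - 0"
    by (intro tendsto_intros) (simp add: add.commute)
  then show "t \<longlonglongrightarrow> T" by (simp add: t_def)
qed

lemma continuous_on_Psi: "continuous_on S (Psi y0 y)"
  unfolding Psi_def by (intro continuous_intros)

lemma Psi_0 [simp]: "Psi y0 y 0 = y"
  unfolding Psi_def by simp

lemma Psi_in_closed_segment: "0 \<le> t \<Longrightarrow> Psi y0 y t \<in> closed_segment y0 y"
  unfolding Psi_def closed_segment_def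
  by (rule CollectI, rule exI[of _ "exp (- t)"]) (auto simp: algebra_simps)

lemma is_lift_iff_is_lifting:
  "is_lift D f y0 x J \<gamma> \<longleftrightarrow> is_lifting f D (Psi y0 (f x)) J \<gamma> \<and> 0 \<in> J \<and> \<gamma> 0 = x"
  unfolding is_lift_def is_lifting_def by auto

lemma mem_aux_dom_iff: "t \<in> aux_dom D f y0 x \<longleftrightarrow> (\<exists>J \<gamma>. is_lift D f y0 x J \<gamma> \<and> t \<in> J)"
  unfolding aux_dom_def by blast

lemma aux_flow_eq_lift:
  assumes "locally_inj_on f D" "is_lift D f y0 x J \<gamma>" "t \<in> J"
  shows "aux_flow D f y0 x t = \<gamma> t"
proof -
  have "\<exists>p J \<gamma>. is_lift D f y0 x J \<gamma> \<and> t \<in> J \<and> p = \<gamma> t" using assms(2,3) by blast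
  from someI_ex[OF this] obtain J' \<gamma>' where
    "is_lift D f y0 x J' \<gamma>'" "t \<in> J'" "aux_flow D f y0 x t = \<gamma>' t"
    unfolding aux_flow_def by blast
  moreover have "\<gamma>' t = \<gamma> t" if "is_lift D f y0 x J' \<gamma>'" "t \<in> J'"
    using is_lifting_unique[OF assms(1), of "Psi y0 (f x)" J' \<gamma>' J \<gamma> 0 t] that assms(2,3)
    by (simp add: is_lift_iff_is_lifting)
  ultimately show ?thesis by simp
qed

lemma aux_dom_imp_lifting:
  assumes "t \<in> aux_dom D f y0 x" "0 \<le> t"
  obtains \<gamma> where "is_lifting f D (Psi y0 (f x)) {0..t} \<gamma>" "\<gamma> 0 = x"
proof -
  obtain J \<gamma> where "is_lift D f y0 x J \<gamma>" "t \<in> J"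
    using assms(1) mem_aux_dom_iff by metis
  moreover from this have "{0..t} \<subseteq> J"
    unfolding is_lift_def is_interval_1 by auto
  ultimately have "is_lifting f D (Psi y0 (f x)) {0..t} \<gamma>" "\<gamma> 0 = x"
    by (auto simp: is_lift_iff_is_lifting is_interval_cc intro: is_lifting_subset)
  then show ?thesis by (rule that)
qed

lemma lifting_imp_aux_dom:
  assumes "is_lifting f D (Psi y0 (f x)) {0..t} \<gamma>" "\<gamma> 0 = x" "0 \<le> t"
  shows "t \<in> aux_dom D f y0 x"
  unfolding mem_aux_dom_iff is_lift_iff_is_lifting using assms by (intro exI[of _ "{0..t}"]) auto

lemma aux_dom_downward:
  assumes "t \<in> aux_dom D f y0 x" "0 \<le> s" "s \<le> t"
  shows "s \<in> aux_dom D f y0 x"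
proof -
  have "0 \<le> t" using assms(2,3) by linarith
  then obtain \<gamma> where \<gamma>: "is_lifting f D (Psi y0 (f x)) {0..t} \<gamma>" "\<gamma> 0 = x"
    by (rule aux_dom_imp_lifting[OF assms(1)])
  have "is_lifting f D (Psi y0 (f x)) {0..s} \<gamma>"
    using assms(3) by (intro is_lifting_subset[OF \<gamma>(1)]) auto
  then show ?thesis
    using \<gamma>(2) assms(2) by (rule lifting_imp_aux_dom)
qed

lemma Sup_downward_closed_nonneg:
  fixes A :: "real set"
  assumes "0 \<in> A" "bdd_above A" "\<forall>t\<in>A. {0..t} \<subseteq> A"
  shows "0 \<le> Sup A" "\<forall>t\<in>A. t \<le> Sup A" "{0..<Sup A} \<subseteq> A"
proof -
  show upper: "\<forall>t\<in>A. t \<le> Sup A"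
    using assms(2) by (simp add: cSup_upper)
  then show "0 \<le> Sup A" using assms(1) by blast
  show "{0..<Sup A} \<subseteq> A"
  proof
    fix t assume t: "t \<in> {0..<Sup A}"
    then obtain u where "u \<in> A" "t < u"
      using less_cSupE[of t A] assms(1) by auto
    then show "t \<in> A" using assms(3) t by fastforce
  qed
qed

text \<open>If the trajectory stopped at \<open>T = Sup (aux_dom \<inter> {0..})\<close>, its points near \<open>T\<close> would
  accumulate in \<open>C\<close> at a point over \<open>\<Psi>(f x, T)\<close>, and a local inverse there continues it past \<open>T\<close>.\<close>

lemma nonneg_subset_aux_dom_if_confined:
  fixes f :: "'a::real_normed_vector \<Rightarrow> 'b::real_normed_vector"
  assumes lh: "local_homeo D f" and oD: "open D" and "x \<in> D" and "compact C" "C \<subseteq> D"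
    and confined: "\<And>\<gamma> t. is_lifting f D (Psi y0 (f x)) {0..t} \<gamma> \<Longrightarrow> \<gamma> 0 = x \<Longrightarrow> 0 \<le> t \<Longrightarrow> \<gamma> t \<in> C"
  shows "{0..} \<subseteq> aux_dom D f y0 x"
proof (rule ccontr)
  define A where "A = aux_dom D f y0 x \<inter> {0..}"
  have "is_lifting f D (Psi y0 (f x)) {0..0} (\<lambda>_. x)"
    using \<open>x \<in> D\<close> unfolding is_lifting_def by (auto simp: is_interval_cc[of 0 0, simplified])
  then have "0 \<in> A" unfolding A_def using lifting_imp_aux_dom[of f D y0 x 0] by simp
  assume "\<not> {0..} \<subseteq> aux_dom D f y0 x"
  then obtain s where "s \<notin> A" "0 \<le> s" unfolding A_def by auto
  have "t \<le> s" if "t \<in> A" for t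
  proof (rule ccontr)
    assume "\<not> t \<le> s"
    then have "s \<in> A" using that aux_dom_downward[of t D f y0 x s] \<open>0 \<le> s\<close> unfolding A_def by auto
    then show False using \<open>s \<notin> A\<close> by simp
  qed
  then have "bdd_above A" by (rule bdd_aboveI)
  have down: "\<forall>t\<in>A. {0..t} \<subseteq> A"
    using aux_dom_downward unfolding A_def by auto
  define T where "T = Sup A"
  note T = Sup_downward_closed_nonneg[OF \<open>0 \<in> A\<close> \<open>bdd_above A\<close> down, folded T_def]
  obtain t where t: "\<And>n. 0 \<le> t n" "\<And>n. t n \<le> T" "\<And>n. t n < T \<or> t n = 0" "t \<longlonglongrightarrow> T"
    using tendsto_from_below[OF T(1)] by blast
  have "\<exists>\<gamma>. is_lifting f D (Psi y0 (f x)) {0..t n} \<gamma> \<and> \<gamma> 0 = x" for n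
  proof -
    have "t n \<in> A" using t(1,3)[of n] T(3) \<open>0 \<in> A\<close> by auto
    then have "t n \<in> aux_dom D f y0 x" unfolding A_def by blast
    then obtain \<gamma> where "is_lifting f D (Psi y0 (f x)) {0..t n} \<gamma>" "\<gamma> 0 = x"
      using aux_dom_imp_lifting[OF _ t(1)[of n]] by blast
    then show ?thesis by blast
  qed
  then obtain \<gamma> where \<gamma>: "\<And>n. is_lifting f D (Psi y0 (f x)) {0..t n} (\<gamma> n)" "\<And>n. \<gamma> n 0 = x"
    by metis
  have "\<forall>n. \<gamma> n (t n) \<in> C" using confined[OF \<gamma> t(1)] by blast
  then obtain p r where p: "p \<in> C" "strict_mono r" "((\<lambda>n. \<gamma> n (t n)) \<circ> r) \<longlonglongrightarrow> p"
    by (rule seq_compactE[OF compact_imp_seq_compact[OF \<open>compact C\<close>]])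
  obtain n \<delta> \<phi> where \<phi>: "\<delta> > 0" "is_lifting f D (Psi y0 (f x)) {0..T + \<delta>} \<phi>"
    "\<forall>s\<in>{0..t (r n)}. \<phi> s = \<gamma> (r n) s"
  proof (rule is_lifting_extend_at_limit[OF lh oD continuous_on_Psi,
        where a=0 and t="t \<circ> r" and \<gamma>="\<gamma> \<circ> r" and T=T and p=p])
    show "(t \<circ> r) \<longlonglongrightarrow> T" using LIMSEQ_subseq_LIMSEQ[OF t(4) p(2)] .
    show "(\<lambda>n. (\<gamma> \<circ> r) n ((t \<circ> r) n)) \<longlonglongrightarrow> p" using p(3) by (simp add: o_def)
    show "p \<in> D" using p(1) \<open>C \<subseteq> D\<close> by blast
    show "is_lifting f D (Psi y0 (f x)) {0..(t \<circ> r) n} ((\<gamma> \<circ> r) n)" for n using \<gamma>(1) by simp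
    show "0 \<le> (t \<circ> r) n" "(t \<circ> r) n \<le> T" for n using t(1,2) by simp_all
  qed (simp add: o_def)
  have "\<phi> 0 = x" using \<phi>(3) \<gamma>(2) t(1) by auto
  then have "T + \<delta> \<in> A"
    using lifting_imp_aux_dom[OF \<phi>(2)] \<phi>(1) T(1) unfolding A_def by auto
  then show False using T(2) \<phi>(1) by fastforce
qed

lemma cond_b_imp_cond_c:
  fixes f :: "'a::real_normed_vector \<Rightarrow> 'b::real_normed_vector"
  assumes lh: "local_homeo D f" and oD: "open D" and b: "cond_b D f x0"
  shows "cond_c D f x0"
  unfolding cond_c_def
proof (intro allI impI ballI)
  fix B x
  assume B: "closed B \<and> bounded_in D B" and x: "x \<in> B"
    and stays: "\<forall>t>0. t \<in> aux_dom D f (f x0) x \<longrightarrow> aux_flow D f (f x0) x t \<in> B"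
  have BD: "B \<subseteq> D" using B closure_subset unfolding bounded_in_def by blast
  define K where "K = {z\<in>B. f z \<in> closed_segment (f x0) (f x)}"
  define C where "C = connected_component_set K x"
  have "x \<in> K" using x unfolding K_def by simp
  then have "compact C"
    using b B x unfolding cond_b_def C_def K_def by (blast intro: componentsI)
  have "C \<subseteq> D" using BD connected_component_subset unfolding C_def K_def by blast
  have confined: "\<gamma> t \<in> C"
    if \<gamma>: "is_lifting f D (Psi (f x0) (f x)) {0..t} \<gamma>" "\<gamma> 0 = x" and "0 \<le> t" for \<gamma> t
  proof -
    have "\<gamma> ` {0..t} \<subseteq> C"
      unfolding C_def
    proof (rule connected_component_maximal)
      show "x \<in> \<gamma> ` {0..t}" using \<gamma>(2) \<open>0 \<le> t\<close> by force
      show "connected (\<gamma> ` {0..t})"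
        using \<gamma>(1) unfolding is_lifting_def by (intro connected_continuous_image) auto
      have "\<gamma> s \<in> B" if s: "s \<in> {0..t}" for s
      proof (cases "s = 0")
        case False
        have "is_lift D f (f x0) x {0..t} \<gamma>"
          using \<gamma> \<open>0 \<le> t\<close> unfolding is_lift_iff_is_lifting by simp
        then have "s \<in> aux_dom D f (f x0) x" "aux_flow D f (f x0) x s = \<gamma> s"
          using s aux_flow_eq_lift[OF local_homeo_imp_locally_inj_on[OF lh]] unfolding mem_aux_dom_iff
          by blast+
        moreover have "s > 0" using False s by simp
        ultimately show ?thesis using stays by metis
      qed (use \<gamma>(2) x in simp)
      moreover have "f (\<gamma> s) \<in> closed_segment (f x0) (f x)" if "s \<in> {0..t}" for s
        using \<gamma>(1) that Psi_in_closed_segment unfolding is_lifting_def by auto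
      ultimately show "\<gamma> ` {0..t} \<subseteq> K" unfolding K_def by auto
    qed
    then show ?thesis using \<open>0 \<le> t\<close> by auto
  qed
  have "x \<in> D" using x BD by blast
  show "{0..} \<subseteq> aux_dom D f (f x0) x"
    by (rule nonneg_subset_aux_dom_if_confined[OF lh oD \<open>x \<in> D\<close> \<open>compact C\<close> \<open>C \<subseteq> D\<close>])
       (fact confined)
qed

section \<open>Properness and derivative bounds\<close>

lemma cond_a1_imp_cond_b: "cond_a1 D f \<Longrightarrow> cond_b D f x0"
  unfolding cond_a1_def cond_b_def proper_on_def
  by (meson closedin_compact closedin_component compact_segment)

lemma finite_span_imp_cond_a1:
  fixes f :: "'a::real_normed_vector \<Rightarrow> 'b::real_normed_vector" and S :: "'a set"
  assumes "local_homeo D f" "open D" "finite S" "span S = UNIV"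
  shows "cond_a1 D f"
  unfolding cond_a1_def proper_on_def
proof (intro allI impI)
  fix B :: "'a set" and K :: "'b set"
  assume B: "closed B \<and> bounded_in D B" and "compact K"
  then have "compact B"
    using finite_span_bounded_closed_imp_compact[OF assms(3,4)] unfolding bounded_in_def by blast
  moreover have "continuous_on B f"
    using local_homeo_imp_continuous_on[OF assms(1,2)] B closure_subset continuous_on_subset
    unfolding bounded_in_def by blast
  ultimately have "compact (B \<inter> (B \<inter> f -` K))"
    using B \<open>compact K\<close> by (intro compact_Int_closed continuous_closed_preimage) (auto simp: compact_imp_closed)
  moreover have "B \<inter> (B \<inter> f -` K) = {x \<in> B. f x \<in> K}" by auto
  ultimately show "compact {x \<in> B. f x \<in> K}" by simp
qed

lemma local_C1_diffeo_imp_local_homeo: "local_C1_diffeo D f \<Longrightarrow> local_homeo D f"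
  unfolding local_C1_diffeo_def local_homeo_def by blast

lemma local_C1_diffeo_local_inverse:
  assumes "local_C1_diffeo D f" "p \<in> D"
  obtains U g G where "p \<in> U" "open U" "U \<subseteq> D" "open (f ` U)" "homeomorphism U (f ` U) f g"
    "\<And>y. y \<in> f ` U \<Longrightarrow> (g has_derivative blinfun_apply (G y)) (at y)" "continuous_on (f ` U) G"
  using assms unfolding local_C1_diffeo_def C1_on_def by metis

lemma local_C1_diffeo_has_derivative:
  assumes "local_C1_diffeo D f"
  obtains F where "\<And>x. x \<in> D \<Longrightarrow> (f has_derivative blinfun_apply (F x)) (at x)"
  using assms unfolding local_C1_diffeo_def C1_on_def by blast

lemma onorm_inv_frechet_derivative_eq:
  fixes f :: "'a::real_normed_vector \<Rightarrow> 'b::real_normed_vector"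
  assumes df: "(f has_derivative blinfun_apply F) (at z)"
    and h: "homeomorphism U (f ` U) f g" "open U" "open (f ` U)" "z \<in> U"
    and dg: "(g has_derivative blinfun_apply G) (at (f z))"
  shows "onorm (inv (frechet_derivative f (at z))) = norm G"
proof -
  \<comment> \<open>\<open>inv\<close> is inversion of functions (by Hilbert choice); both chain rules identify it with \<open>G\<close>.\<close>
  have fz: "f z \<in> f ` U" using h(4) by blast
  have "((g \<circ> f) has_derivative (blinfun_apply G \<circ> blinfun_apply F)) (at z)"
    using df dg by (rule diff_chain_at)
  then have d1: "((\<lambda>x. x) has_derivative (blinfun_apply G \<circ> blinfun_apply F)) (at z)"
    by (rule has_derivative_transform_within_open[OF _ h(2,4)]) (simp add: homeomorphism_apply1[OF h(1)])
  have left: "blinfun_apply G \<circ> blinfun_apply F = id"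
    using has_derivative_unique[OF d1 has_derivative_ident] by (simp add: id_def)
  have "(f has_derivative blinfun_apply F) (at (g (f z)))"
    using df homeomorphism_apply1[OF h(1,4)] by simp
  with dg have "((f \<circ> g) has_derivative (blinfun_apply F \<circ> blinfun_apply G)) (at (f z))"
    by (rule diff_chain_at)
  then have d2: "((\<lambda>y. y) has_derivative (blinfun_apply F \<circ> blinfun_apply G)) (at (f z))"
    by (rule has_derivative_transform_within_open[OF _ h(3) fz]) (simp add: homeomorphism_apply2[OF h(1)])
  have right: "blinfun_apply F \<circ> blinfun_apply G = id"
    using has_derivative_unique[OF d2 has_derivative_ident] by (simp add: id_def)
  have "inv (blinfun_apply F) = blinfun_apply G"
    by (rule inv_unique_comp[OF right left])
  then show ?thesis
    using frechet_derivative_at[OF df] by (simp add: norm_blinfun.rep_eq)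
qed

lemma continuous_on_onorm_inv_frechet_derivative:
  fixes f :: "'a::real_normed_vector \<Rightarrow> 'b::real_normed_vector"
  assumes lcd: "local_C1_diffeo D f" and oD: "open D"
  shows "continuous_on D (\<lambda>x. onorm (inv (frechet_derivative f (at x))))"
proof -
  obtain F where F: "\<And>x. x \<in> D \<Longrightarrow> (f has_derivative blinfun_apply (F x)) (at x)"
    using local_C1_diffeo_has_derivative[OF lcd] by blast
  have "isCont (\<lambda>x. onorm (inv (frechet_derivative f (at x)))) p" if "p \<in> D" for p
  proof -
    obtain U g G where U: "p \<in> U" "open U" "U \<subseteq> D" "open (f ` U)" "homeomorphism U (f ` U) f g"
      and G: "\<And>y. y \<in> f ` U \<Longrightarrow> (g has_derivative blinfun_apply (G y)) (at y)" "continuous_on (f ` U) G"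
      using local_C1_diffeo_local_inverse[OF lcd \<open>p \<in> D\<close>] by blast
    have "continuous_on U (\<lambda>x. norm (G (f x)))"
      using continuous_on_compose[OF homeomorphism_cont1[OF U(5)] G(2)]
      by (intro continuous_on_norm) (simp add: o_def)
    moreover have "norm (G (f x)) = onorm (inv (frechet_derivative f (at x)))" if "x \<in> U" for x
      using onorm_inv_frechet_derivative_eq[OF F U(5,2,4) that G(1)] U(3) that by auto
    ultimately have "continuous_on U (\<lambda>x. onorm (inv (frechet_derivative f (at x))))"
      by (rule continuous_on_eq)
    then show ?thesis
      using U(1,2) continuous_on_eq_continuous_at by blast
  qed
  then show ?thesis
    using oD by (simp add: continuous_on_eq_continuous_at)
qed

lemma finite_span_imp_cond_a2:
  fixes f :: "'a::real_normed_vector \<Rightarrow> 'b::real_normed_vector" and S :: "'a set"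
  assumes "local_C1_diffeo D f" "open D" "finite S" "span S = UNIV"
  shows "cond_a2 D f"
  unfolding cond_a2_def
proof (intro conjI assms(1) allI impI)
  fix B :: "'a set" assume B: "closed B \<and> bounded_in D B"
  then have "compact B"
    using finite_span_bounded_closed_imp_compact[OF assms(3,4)] unfolding bounded_in_def by blast
  moreover have "continuous_on B (\<lambda>x. onorm (inv (frechet_derivative f (at x))))"
    using continuous_on_onorm_inv_frechet_derivative[OF assms(1,2)] B closure_subset
    unfolding bounded_in_def by (meson continuous_on_subset order_trans)
  ultimately show "bdd_above ((\<lambda>x. onorm (inv (frechet_derivative f (at x)))) ` B)"
    by (intro bounded_imp_bdd_above compact_imp_bounded compact_continuous_image)
qed

lemma onorm_scaleR_vector: "onorm (\<lambda>t::real. t *\<^sub>R v) = norm v"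
  using onorm_scaleR_left[of "\<lambda>x::real. x" v]
  by (simp add: onorm_id[unfolded id_def] bounded_linear_ident)

lemma is_lifting_ray_has_derivative:
  fixes f :: "'a::real_normed_vector \<Rightarrow> 'b::real_normed_vector"
  assumes lcd: "local_C1_diffeo D f" and BD: "B \<subseteq> D"
    and M: "\<And>z. z \<in> B \<Longrightarrow> onorm (inv (frechet_derivative f (at z))) \<le> M"
    and l: "is_lifting f B (\<lambda>u. y0 + u *\<^sub>R w) J \<gamma>" and s: "s \<in> J"
  obtains v where "(\<gamma> has_derivative (\<lambda>t. t *\<^sub>R v)) (at s within J)" "norm v \<le> M * norm w"
proof -
  define \<tau> where "\<tau> = (\<lambda>u. y0 + u *\<^sub>R w)"
  have zB: "\<gamma> s \<in> B" and f\<gamma>: "f (\<gamma> s) = \<tau> s" and c\<gamma>: "continuous_on J \<gamma>"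
    using l s unfolding is_lifting_def \<tau>_def by auto
  obtain F where F: "\<And>x. x \<in> D \<Longrightarrow> (f has_derivative blinfun_apply (F x)) (at x)"
    using local_C1_diffeo_has_derivative[OF lcd] by blast
  have "\<gamma> s \<in> D" using zB BD by blast
  obtain U g G where U: "\<gamma> s \<in> U" "open U" "U \<subseteq> D" "open (f ` U)" "homeomorphism U (f ` U) f g"
    and G: "\<And>y. y \<in> f ` U \<Longrightarrow> (g has_derivative blinfun_apply (G y)) (at y)"
    and "continuous_on (f ` U) G"
    using local_C1_diffeo_local_inverse[OF lcd \<open>\<gamma> s \<in> D\<close>] by blast
  have \<tau>U: "\<tau> s \<in> f ` U" using f\<gamma> U(1) by (metis imageI)
  have "onorm (inv (frechet_derivative f (at (\<gamma> s)))) = norm (G (\<tau> s))"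
    using onorm_inv_frechet_derivative_eq[OF F U(5,2,4,1)] G \<tau>U U(1,3) f\<gamma> by auto
  then have "norm (G (\<tau> s)) \<le> M" using M[OF zB] by simp
  then have bound: "norm (G (\<tau> s) w) \<le> M * norm w"
    using norm_blinfun[of "G (\<tau> s)" w] mult_right_mono[of "norm (G (\<tau> s))" M "norm w"] by simp
  have "(\<tau> has_derivative (\<lambda>t. t *\<^sub>R w)) (at s)"
    unfolding \<tau>_def by (auto intro!: derivative_eq_intros)
  then have "((g \<circ> \<tau>) has_derivative (blinfun_apply (G (\<tau> s)) \<circ> (\<lambda>t. t *\<^sub>R w))) (at s)"
    using G[OF \<tau>U] by (rule diff_chain_at)
  then have dg: "((g \<circ> \<tau>) has_derivative (\<lambda>t. t *\<^sub>R G (\<tau> s) w)) (at s within J)"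
    by (simp add: o_def blinfun.scaleR_right has_derivative_at_withinI)
  obtain e where e: "e > 0" "ball (\<gamma> s) e \<subseteq> U" using U(1,2) by (meson openE)
  obtain d where d: "d > 0" "\<forall>s'\<in>J. dist s' s < d \<longrightarrow> dist (\<gamma> s') (\<gamma> s) < e"
    using c\<gamma> s e(1) unfolding continuous_on_iff by blast
  have "(\<gamma> has_derivative (\<lambda>t. t *\<^sub>R G (\<tau> s) w)) (at s within J)"
  proof (rule has_derivative_transform_within[OF dg d(1) s])
    fix s' assume s': "s' \<in> J" "dist s' s < d"
    then have "\<gamma> s' \<in> U" using d(2) e(2) by (auto simp: dist_commute subset_iff)
    moreover have "f (\<gamma> s') = \<tau> s'"
      using l s'(1) unfolding is_lifting_def \<tau>_def by auto
    ultimately show "(g \<circ> \<tau>) s' = \<gamma> s'"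
      using homeomorphism_apply1[OF U(5)] by fastforce
  qed
  then show ?thesis using that bound by blast
qed

lemma is_lifting_ray_lipschitz:
  fixes f :: "'a::real_normed_vector \<Rightarrow> 'b::real_normed_vector"
  assumes "local_C1_diffeo D f" "B \<subseteq> D"
    and "\<And>z. z \<in> B \<Longrightarrow> onorm (inv (frechet_derivative f (at z))) \<le> M"
    and l: "is_lifting f B (\<lambda>u. y0 + u *\<^sub>R w) J \<gamma>" and "s \<in> J" "t \<in> J"
  shows "norm (\<gamma> s - \<gamma> t) \<le> M * norm w * \<bar>s - t\<bar>"
proof -
  have "\<forall>s\<in>J. \<exists>v. (\<gamma> has_derivative (\<lambda>t. t *\<^sub>R v)) (at s within J) \<and> norm v \<le> M * norm w"
    using is_lifting_ray_has_derivative[OF assms(1-4)] by metis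
  then obtain v where v: "\<And>s. s \<in> J \<Longrightarrow> (\<gamma> has_derivative (\<lambda>t. t *\<^sub>R v s)) (at s within J)"
    "\<And>s. s \<in> J \<Longrightarrow> norm (v s) \<le> M * norm w"
    by metis
  have "convex J" using l unfolding is_lifting_def by (simp add: is_interval_convex_1)
  then have "norm (\<gamma> s - \<gamma> t) \<le> M * norm w * norm (s - t)"
    using v assms(5,6) by (intro differentiable_bound) (auto simp: onorm_scaleR_vector)
  then show ?thesis by simp
qed

lemma Cauchy_if_lipschitz_image:
  fixes p :: "nat \<Rightarrow> 'a::real_normed_vector" and u :: "nat \<Rightarrow> real"
  assumes "\<And>m n. norm (p m - p n) \<le> L * \<bar>u m - u n\<bar>" "Cauchy u"
  shows "Cauchy p"
proof (rule CauchyI)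
  fix e :: real assume "e > 0"
  define L' where "L' = max L 1"
  obtain N where N: "\<forall>m\<ge>N. \<forall>n\<ge>N. norm (u m - u n) < e / L'"
    using \<open>Cauchy u\<close> \<open>e > 0\<close> unfolding Cauchy_iff L'_def by (meson divide_pos_pos max.strict_coboundedI2 zero_less_one)
  have "norm (p m - p n) < e" if "N \<le> m" "N \<le> n" for m n
  proof -
    have "norm (p m - p n) \<le> L' * \<bar>u m - u n\<bar>"
      using assms(1)[of m n] unfolding L'_def by (meson abs_ge_zero max.cobounded1 mult_right_mono order_trans)
    also have "\<dots> < e"
      using N that \<open>e > 0\<close> unfolding L'_def by (simp add: field_simps)
    finally show ?thesis .
  qed
  then show "\<exists>N. \<forall>m\<ge>N. \<forall>n\<ge>N. norm (p m - p n) < e" by blast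
qed

section \<open>Maximal liftings inside a closed set\<close>

lemma is_lifting_closed_limit:
  fixes f :: "'a::banach \<Rightarrow> 'b::real_normed_vector" and \<sigma> :: "real \<Rightarrow> 'b"
  assumes lh: "local_homeo D f" and oD: "open D" and c\<sigma>: "continuous_on UNIV \<sigma>"
    and BD: "B \<subseteq> D" and cB: "closed B"
    and \<gamma>: "\<And>n. is_lifting f B \<sigma> {0..t n} (\<gamma> n)" "\<And>n. \<gamma> n 0 = q"
    and t: "\<And>n. 0 \<le> t n" "\<And>n. t n \<le> T" "t \<longlonglongrightarrow> T"
    and lip: "\<And>n s s'. s \<in> {0..t n} \<Longrightarrow> s' \<in> {0..t n} \<Longrightarrow> norm (\<gamma> n s - \<gamma> n s') \<le> L * \<bar>s - s'\<bar>"
  obtains \<phi> where "is_lifting f B \<sigma> {0..T} \<phi>" "\<phi> 0 = q"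
proof -
  have inj: "locally_inj_on f D" using lh by (rule local_homeo_imp_locally_inj_on)
  have \<gamma>D: "is_lifting f D \<sigma> {0..t n} (\<gamma> n)" for n using \<gamma>(1) BD by (rule is_lifting_mono)
  have agree: "\<gamma> m s = \<gamma> n s" if "s \<in> {0..t m}" "s \<in> {0..t n}" for m n s
    using is_lifting_unique[OF inj \<gamma>D[of m] \<gamma>D[of n], of 0 s] that \<gamma>(2) by auto
  define p where "p n = \<gamma> n (t n)" for n
  have "norm (p m - p n) \<le> L * \<bar>t m - t n\<bar>" if "t m \<le> t n" for m n
    using lip[of "t m" n "t n"] agree[of "t m" m n] that t(1)[of m] unfolding p_def by auto
  then have "norm (p m - p n) \<le> L * \<bar>t m - t n\<bar>" for m n
    by (metis abs_minus_commute linear norm_minus_commute)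
  then have "Cauchy p"
    using LIMSEQ_imp_Cauchy[OF t(3)] by (rule Cauchy_if_lipschitz_image)
  then obtain P where P: "p \<longlonglongrightarrow> P" using Cauchy_convergent_iff convergent_def by blast
  have "p n \<in> B" for n using \<gamma>(1)[of n] t(1)[of n] unfolding is_lifting_def p_def by auto
  then have "P \<in> B" using closed_sequentially[OF cB] P by blast
  obtain n \<delta> \<phi> where \<phi>: "\<delta> > 0" "is_lifting f D \<sigma> {0..T + \<delta>} \<phi>" "\<forall>s\<in>{0..t n}. \<phi> s = \<gamma> n s" "\<phi> T = P"
    using is_lifting_extend_at_limit[OF lh oD c\<sigma> \<gamma>D t(1,2,3), of P] P \<open>P \<in> B\<close> BD
    unfolding p_def by blast
  have \<phi>T: "is_lifting f D \<sigma> {0..T} \<phi>"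
    using \<phi>(1) by (intro is_lifting_subset[OF \<phi>(2)]) auto
  have "\<phi> 0 = q" using \<phi>(3) \<gamma>(2) t(1) by auto
  have "\<phi> s \<in> B" if s: "s \<in> {0..T}" for s
  proof (cases "s = T")
    case False
    then have "\<forall>\<^sub>F m in sequentially. s < t m"
      using s t(3) by (intro order_tendstoD) auto
    then obtain m where "s < t m"
      using eventually_happens'[OF sequentially_bot] by blast
    then have "\<phi> s = \<gamma> m s"
      using is_lifting_unique[OF inj \<phi>T \<gamma>D[of m], of 0 s] \<open>\<phi> 0 = q\<close> \<gamma>(2) s t(1) by auto
    then show ?thesis using \<gamma>(1)[of m] \<open>s < t m\<close> s unfolding is_lifting_def by auto
  qed (use \<phi>(4) \<open>P \<in> B\<close> in simp)
  then have "is_lifting f B \<sigma> {0..T} \<phi>" using \<phi>T unfolding is_lifting_def by auto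
  then show ?thesis using that \<open>\<phi> 0 = q\<close> by blast
qed

lemma is_lifting_leaves_closed:
  fixes f :: "'a::real_normed_vector \<Rightarrow> 'b::real_normed_vector" and \<sigma> :: "real \<Rightarrow> 'b"
  assumes lh: "local_homeo D f" and oD: "open D" and c\<sigma>: "continuous_on UNIV \<sigma>" and BD: "B \<subseteq> D"
    and \<Lambda>: "is_lifting f B \<sigma> {0..\<beta>} \<Lambda>" "0 \<le> \<beta>"
    and maximal: "\<And>u \<phi>. u \<le> R \<Longrightarrow> is_lifting f B \<sigma> {0..u} \<phi> \<Longrightarrow> \<phi> 0 = \<Lambda> 0 \<Longrightarrow> u \<le> \<beta>"
    and "\<beta> < R" "\<epsilon> > 0"
  obtains c \<phi> where "\<beta> < c" "c \<le> R" "c < \<beta> + \<epsilon>" "is_lifting f D \<sigma> {0..c} \<phi>"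
    "\<forall>u\<in>{0..\<beta>}. \<phi> u = \<Lambda> u" "\<phi> c \<notin> B"
proof -
  have \<Lambda>D: "is_lifting f D \<sigma> {0..\<beta>} \<Lambda>" using \<Lambda>(1) BD by (rule is_lifting_mono)
  obtain \<delta> \<phi> where \<phi>: "\<delta> > 0" "is_lifting f D \<sigma> {0..\<beta> + \<delta>} \<phi>" "\<forall>u\<in>{0..\<beta>}. \<phi> u = \<Lambda> u"
  proof (rule is_lifting_extend_at_limit[OF lh oD c\<sigma>, where a=0 and t="\<lambda>_. \<beta>" and \<gamma>="\<lambda>_. \<Lambda>"
        and T=\<beta> and p="\<Lambda> \<beta>"])
    show "\<Lambda> \<beta> \<in> D"
      using \<Lambda> BD unfolding is_lifting_def by fastforce
  qed (use \<Lambda>D \<Lambda>(2) in simp_all)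
  define e where "e = min (min \<delta> (\<epsilon> / 2)) (R - \<beta>)"
  have e: "0 < e" "e \<le> \<delta>" "e < \<epsilon>" "\<beta> + e \<le> R"
    using \<phi>(1) \<open>\<epsilon> > 0\<close> \<open>\<beta> < R\<close> unfolding e_def by auto
  have "\<exists>c\<in>{\<beta><..\<beta> + e}. \<phi> c \<notin> B"
  proof (rule ccontr)
    assume "\<not> ?thesis"
    then have "\<phi> ` {0..\<beta> + e} \<subseteq> B"
      using \<Lambda>(1) \<phi>(3) unfolding is_lifting_def by force
    moreover have "is_lifting f D \<sigma> {0..\<beta> + e} \<phi>"
      using e(2) by (intro is_lifting_subset[OF \<phi>(2)]) auto
    ultimately have "is_lifting f B \<sigma> {0..\<beta> + e} \<phi>"
      unfolding is_lifting_def by auto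
    moreover have "\<phi> 0 = \<Lambda> 0" using \<phi>(3) \<Lambda>(2) by auto
    ultimately have "\<beta> + e \<le> \<beta>"
      using maximal e(4) by blast
    then show False using e(1) by simp
  qed
  then obtain c where c: "\<beta> < c" "c \<le> \<beta> + e" "\<phi> c \<notin> B" by auto
  have "is_lifting f D \<sigma> {0..c} \<phi>"
    using c e(2) by (intro is_lifting_subset[OF \<phi>(2)]) auto
  then show ?thesis
    using that c e \<phi>(3) by auto
qed

text \<open>The bound \<open>M\<close> makes all liftings inside \<open>B\<close> uniformly Lipschitz, so the supremum \<open>\<beta>\<close>
  of their lengths is attained.\<close>

lemma maximal_lifting_along_ray:
  fixes f :: "'a::banach \<Rightarrow> 'b::real_normed_vector"
  assumes lcd: "local_C1_diffeo D f" and oD: "open D" and BD: "B \<subseteq> D" and cB: "closed B"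
    and M: "\<And>z. z \<in> B \<Longrightarrow> onorm (inv (frechet_derivative f (at z))) \<le> M"
    and q: "q \<in> B" "f q = y0" and "0 \<le> R"
  obtains \<beta> \<Lambda> where "0 \<le> \<beta>" "\<beta> \<le> R" "is_lifting f B (\<lambda>u. y0 + u *\<^sub>R w) {0..\<beta>} \<Lambda>" "\<Lambda> 0 = q"
    "\<And>\<epsilon>. \<epsilon> > 0 \<Longrightarrow> \<exists>c \<phi>. \<beta> \<le> c \<and> c \<le> R \<and> c < \<beta> + \<epsilon> \<and>
        is_lifting f D (\<lambda>u. y0 + u *\<^sub>R w) {0..c} \<phi> \<and> (\<forall>u\<in>{0..\<beta>}. \<phi> u = \<Lambda> u) \<and> (c = R \<or> \<phi> c \<notin> B)"
proof -
  define \<tau> where "\<tau> = (\<lambda>u::real. y0 + u *\<^sub>R w)"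
  have lh: "local_homeo D f" using lcd by (rule local_C1_diffeo_imp_local_homeo)
  have c\<tau>: "continuous_on UNIV \<tau>" unfolding \<tau>_def by (intro continuous_intros)
  define I where "I = {u. 0 \<le> u \<and> u \<le> R \<and> (\<exists>\<gamma>. is_lifting f B \<tau> {0..u} \<gamma> \<and> \<gamma> 0 = q)}"
  have "is_lifting f B \<tau> {0..0} (\<lambda>_. q)"
    using q unfolding is_lifting_def \<tau>_def by (auto simp: is_interval_cc[of 0 0, simplified])
  then have "0 \<in> I" unfolding I_def using \<open>0 \<le> R\<close> by blast
  have "bdd_above I" unfolding I_def by (rule bdd_aboveI[of _ R]) auto
  have down: "\<forall>u\<in>I. {0..u} \<subseteq> I"
  proof (intro ballI subsetI)
    fix u s assume "u \<in> I" "s \<in> {0..u}"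
    obtain \<gamma> where "u \<le> R" "is_lifting f B \<tau> {0..u} \<gamma>" "\<gamma> 0 = q" using \<open>u \<in> I\<close> unfolding I_def by blast
    moreover from this have "is_lifting f B \<tau> {0..s} \<gamma>"
      using \<open>s \<in> {0..u}\<close> by (auto elim!: is_lifting_subset)
    ultimately show "s \<in> I" using \<open>s \<in> {0..u}\<close> unfolding I_def by auto
  qed
  define \<beta> where "\<beta> = Sup I"
  note Sup_I = Sup_downward_closed_nonneg[OF \<open>0 \<in> I\<close> \<open>bdd_above I\<close> down, folded \<beta>_def]
  have "\<beta> \<le> R"
    unfolding \<beta>_def
  proof (rule cSup_least)
    show "I \<noteq> {}" using \<open>0 \<in> I\<close> by blast
  qed (simp add: I_def)
  have "\<beta> \<in> I"
  proof -
    obtain t where t: "\<And>n. 0 \<le> t n" "\<And>n. t n \<le> \<beta>" "\<And>n. t n < \<beta> \<or> t n = 0" "t \<longlonglongrightarrow> \<beta>"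
      using tendsto_from_below[OF Sup_I(1)] by blast
    have "t n \<in> I" for n
      using Sup_I(3) t(1,3) \<open>0 \<in> I\<close> by fastforce
    then have "\<exists>\<gamma>. is_lifting f B \<tau> {0..t n} \<gamma> \<and> \<gamma> 0 = q" for n
      unfolding I_def by blast
    then obtain \<gamma> where \<gamma>: "\<And>n. is_lifting f B \<tau> {0..t n} (\<gamma> n)" "\<And>n. \<gamma> n 0 = q"
      by metis
    have "norm (\<gamma> n s - \<gamma> n s') \<le> M * norm w * \<bar>s - s'\<bar>"
      if "s \<in> {0..t n}" "s' \<in> {0..t n}" for n s s'
      using is_lifting_ray_lipschitz[OF lcd BD M \<gamma>(1)[unfolded \<tau>_def] that] .
    then obtain \<phi> where "is_lifting f B \<tau> {0..\<beta>} \<phi>" "\<phi> 0 = q"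
      using is_lifting_closed_limit[OF lh oD c\<tau> BD cB \<gamma> t(1,2,4)] by blast
    then show ?thesis unfolding I_def using Sup_I(1) \<open>\<beta> \<le> R\<close> by blast
  qed
  then obtain \<Lambda> where \<Lambda>: "is_lifting f B \<tau> {0..\<beta>} \<Lambda>" "\<Lambda> 0 = q" unfolding I_def by blast
  have "\<exists>c \<phi>. \<beta> \<le> c \<and> c \<le> R \<and> c < \<beta> + \<epsilon> \<and> is_lifting f D \<tau> {0..c} \<phi> \<and>
      (\<forall>u\<in>{0..\<beta>}. \<phi> u = \<Lambda> u) \<and> (c = R \<or> \<phi> c \<notin> B)" if "\<epsilon> > 0" for \<epsilon>
  proof (cases "\<beta> = R")
    case True
    then show ?thesis
      using \<Lambda>(1) BD \<open>\<epsilon> > 0\<close> by (intro exI[of _ R] exI[of _ \<Lambda>]) (auto elim: is_lifting_mono)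
  next
    case False
    have "u \<le> \<beta>" if "u \<le> R" "is_lifting f B \<tau> {0..u} \<phi>" "\<phi> 0 = \<Lambda> 0" for u \<phi>
    proof (cases "0 \<le> u")
      case True
      then show ?thesis using that \<Lambda>(2) Sup_I(2) unfolding I_def by auto
    qed (use Sup_I(1) in simp)
    then obtain c \<phi> where "\<beta> < c" "c \<le> R" "c < \<beta> + \<epsilon>" "is_lifting f D \<tau> {0..c} \<phi>"
        "\<forall>u\<in>{0..\<beta>}. \<phi> u = \<Lambda> u" "\<phi> c \<notin> B"
      using is_lifting_leaves_closed[OF lh oD c\<tau> BD \<Lambda>(1) Sup_I(1)] False \<open>\<beta> \<le> R\<close> \<open>\<epsilon> > 0\<close>
      by (metis order_less_le)
    then show ?thesis by (intro exI[of _ c] exI[of _ \<phi>]) auto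
  qed
  then show ?thesis
    using that[OF Sup_I(1) \<open>\<beta> \<le> R\<close> \<Lambda>[unfolded \<tau>_def]] unfolding \<tau>_def by blast
qed

lemma is_lifting_two_rays:
  fixes v :: "'b::real_vector"
  assumes p: "is_lifting f E (\<lambda>u. y0 + s0 *\<^sub>R v + u *\<^sub>R v) {0..cp} \<phi>p"
    and m: "is_lifting f E (\<lambda>u. y0 + s0 *\<^sub>R v + u *\<^sub>R - v) {0..cm} \<phi>m"
    and "\<phi>p 0 = \<phi>m 0" "0 \<le> cp" "0 \<le> cm"
  shows "is_lifting f E (\<lambda>s. y0 + s *\<^sub>R v) {s0 - cm..s0 + cp}
           (\<lambda>s. if s \<le> s0 then \<phi>m (s0 - s) else \<phi>p (s - s0))"
proof -
  have "is_lifting f E (\<lambda>s. y0 + s *\<^sub>R v) {s0 - cm..s0} (\<phi>m \<circ> (\<lambda>s. s0 - s))"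
    by (rule is_lifting_reparametrize[OF m]) (auto intro!: continuous_intros simp: algebra_simps)
  moreover have "is_lifting f E (\<lambda>s. y0 + s *\<^sub>R v) {s0..s0 + cp} (\<phi>p \<circ> (\<lambda>s. s - s0))"
    by (rule is_lifting_reparametrize[OF p]) (auto intro!: continuous_intros simp: algebra_simps)
  ultimately show ?thesis
    using is_lifting_glue[of f E _ "s0 - cm" s0 _ "s0 + cp"] assms(3-5) by (simp add: o_def)
qed

lemma maximal_lifting_on_segment:
  fixes f :: "'a::banach \<Rightarrow> 'b::real_normed_vector"
  assumes lcd: "local_C1_diffeo D f" and oD: "open D" and BD: "B \<subseteq> D" and cB: "closed B"
    and M: "\<And>z. z \<in> B \<Longrightarrow> onorm (inv (frechet_derivative f (at z))) \<le> M"
    and q: "q \<in> B" "f q = y0 + s0 *\<^sub>R v" and s0: "0 \<le> s0" "s0 \<le> 1"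
  obtains a b \<Lambda> where "0 \<le> a" "a \<le> s0" "s0 \<le> b" "b \<le> 1"
    "is_lifting f B (\<lambda>s. y0 + s *\<^sub>R v) {a..b} \<Lambda>" "\<Lambda> s0 = q"
    "\<And>\<epsilon>. \<epsilon> > 0 \<Longrightarrow> \<exists>\<alpha> \<beta> \<Phi>. 0 \<le> \<alpha> \<and> \<alpha> \<le> a \<and> a - \<alpha> < \<epsilon> \<and> b \<le> \<beta> \<and> \<beta> - b < \<epsilon> \<and> \<beta> \<le> 1 \<and>
        is_lifting f D (\<lambda>s. y0 + s *\<^sub>R v) {\<alpha>..\<beta>} \<Phi> \<and> (\<forall>s\<in>{a..b}. \<Phi> s = \<Lambda> s) \<and>
        (\<alpha> = 0 \<or> \<Phi> \<alpha> \<notin> B) \<and> (\<beta> = 1 \<or> \<Phi> \<beta> \<notin> B)"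
proof -
  define glue where "glue \<phi>m \<phi>p = (\<lambda>s. if s \<le> s0 then \<phi>m (s0 - s) else \<phi>p (s - s0))"
    for \<phi>m \<phi>p :: "real \<Rightarrow> 'a"
  obtain bp \<Lambda>p where p: "0 \<le> bp" "bp \<le> 1 - s0"
      "is_lifting f B (\<lambda>u. y0 + s0 *\<^sub>R v + u *\<^sub>R v) {0..bp} \<Lambda>p" "\<Lambda>p 0 = q"
    and exit_p: "\<And>\<epsilon>. \<epsilon> > 0 \<Longrightarrow> \<exists>c \<phi>. bp \<le> c \<and> c \<le> 1 - s0 \<and> c < bp + \<epsilon> \<and>
        is_lifting f D (\<lambda>u. y0 + s0 *\<^sub>R v + u *\<^sub>R v) {0..c} \<phi> \<and> (\<forall>u\<in>{0..bp}. \<phi> u = \<Lambda>p u) \<and>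
        (c = 1 - s0 \<or> \<phi> c \<notin> B)"
  proof (rule maximal_lifting_along_ray[OF lcd oD BD cB M q, where R="1 - s0" and w=v])
    show "0 \<le> 1 - s0" using s0 by simp
  qed (assumption | rule that)+
  obtain bm \<Lambda>m where m: "0 \<le> bm" "bm \<le> s0"
      "is_lifting f B (\<lambda>u. y0 + s0 *\<^sub>R v + u *\<^sub>R - v) {0..bm} \<Lambda>m" "\<Lambda>m 0 = q"
    and exit_m: "\<And>\<epsilon>. \<epsilon> > 0 \<Longrightarrow> \<exists>c \<phi>. bm \<le> c \<and> c \<le> s0 \<and> c < bm + \<epsilon> \<and>
        is_lifting f D (\<lambda>u. y0 + s0 *\<^sub>R v + u *\<^sub>R - v) {0..c} \<phi> \<and> (\<forall>u\<in>{0..bm}. \<phi> u = \<Lambda>m u) \<and>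
        (c = s0 \<or> \<phi> c \<notin> B)"
    by (rule maximal_lifting_along_ray[OF lcd oD BD cB M q s0(1), where w="- v"]) (assumption | rule that)+
  have "is_lifting f B (\<lambda>s. y0 + s *\<^sub>R v) {s0 - bm..s0 + bp} (glue \<Lambda>m \<Lambda>p)"
    unfolding glue_def using p m by (intro is_lifting_two_rays) auto
  moreover have "glue \<Lambda>m \<Lambda>p s0 = q" using m(4) by (simp add: glue_def)
  moreover have "\<exists>\<alpha> \<beta> \<Phi>. 0 \<le> \<alpha> \<and> \<alpha> \<le> s0 - bm \<and> s0 - bm - \<alpha> < \<epsilon> \<and> s0 + bp \<le> \<beta> \<and>
      \<beta> - (s0 + bp) < \<epsilon> \<and> \<beta> \<le> 1 \<and> is_lifting f D (\<lambda>s. y0 + s *\<^sub>R v) {\<alpha>..\<beta>} \<Phi> \<and>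
      (\<forall>s\<in>{s0 - bm..s0 + bp}. \<Phi> s = glue \<Lambda>m \<Lambda>p s) \<and> (\<alpha> = 0 \<or> \<Phi> \<alpha> \<notin> B) \<and> (\<beta> = 1 \<or> \<Phi> \<beta> \<notin> B)"
    if \<epsilon>: "\<epsilon> > 0" for \<epsilon>
  proof -
    obtain cp \<phi>p where cp: "bp \<le> cp" "cp \<le> 1 - s0" "cp < bp + \<epsilon>"
        "is_lifting f D (\<lambda>u. y0 + s0 *\<^sub>R v + u *\<^sub>R v) {0..cp} \<phi>p" "\<forall>u\<in>{0..bp}. \<phi>p u = \<Lambda>p u"
        "cp = 1 - s0 \<or> \<phi>p cp \<notin> B"
      using exit_p[OF \<epsilon>] by blast
    obtain cm \<phi>m where cm: "bm \<le> cm" "cm \<le> s0" "cm < bm + \<epsilon>"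
        "is_lifting f D (\<lambda>u. y0 + s0 *\<^sub>R v + u *\<^sub>R - v) {0..cm} \<phi>m" "\<forall>u\<in>{0..bm}. \<phi>m u = \<Lambda>m u"
        "cm = s0 \<or> \<phi>m cm \<notin> B"
      using exit_m[OF \<epsilon>] by blast
    have "is_lifting f D (\<lambda>s. y0 + s *\<^sub>R v) {s0 - cm..s0 + cp} (glue \<phi>m \<phi>p)"
      unfolding glue_def using cp m p cm by (intro is_lifting_two_rays) auto
    moreover have "\<forall>s\<in>{s0 - bm..s0 + bp}. glue \<phi>m \<phi>p s = glue \<Lambda>m \<Lambda>p s"
      using cp(5) cm(5) unfolding glue_def by auto
    moreover have "glue \<phi>m \<phi>p (s0 - cm) = \<phi>m cm"
      using cm(1) m(1) unfolding glue_def by auto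
    moreover have "glue \<phi>m \<phi>p (s0 + cp) = \<phi>p cp"
    proof (cases "cp = 0")
      case True
      then show ?thesis using cp(5) cm(5) p(1,4) m(1,4) unfolding glue_def by auto
    qed (use cp(1) p(1) in \<open>auto simp: glue_def\<close>)
    ultimately show ?thesis
      using cp cm m(1) p(1)
      by (intro exI[of _ "s0 - cm"] exI[of _ "s0 + cp"] exI[of _ "glue \<phi>m \<phi>p"]) auto
  qed
  ultimately show ?thesis
    using that[of "s0 - bm" "s0 + bp"] m(1,2) p(1,2) by simp
qed

lemma closed_segment_parametrization:
  fixes v :: "'b::real_normed_vector"
  assumes "v \<noteq> 0" "y \<in> closed_segment y0 (y0 + v)"
  shows "y = y0 + (norm (y - y0) / norm v) *\<^sub>R v" "0 \<le> norm (y - y0) / norm v" "norm (y - y0) / norm v \<le> 1"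
proof -
  obtain u where u: "0 \<le> u" "u \<le> 1" "y = y0 + u *\<^sub>R v"
    using assms(2) unfolding closed_segment_def by (auto simp: algebra_simps)
  then have "norm (y - y0) / norm v = u" using assms(1) by simp
  then show "y = y0 + (norm (y - y0) / norm v) *\<^sub>R v" "0 \<le> norm (y - y0) / norm v"
    "norm (y - y0) / norm v \<le> 1" using u by simp_all
qed

lemma connected_component_preimage_segment_subset_compact:
  fixes f :: "'a::banach \<Rightarrow> 'b::real_normed_vector"
  assumes lcd: "local_C1_diffeo D f" and oD: "open D" and BD: "B \<subseteq> D" and cB: "closed B"
    and M: "\<And>z. z \<in> B \<Longrightarrow> onorm (inv (frechet_derivative f (at z))) \<le> M"
    and "v \<noteq> 0" and K: "K = {z\<in>B. f z \<in> closed_segment y0 (y0 + v)}" and "q \<in> K"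
  obtains \<Gamma> where "compact \<Gamma>" "connected_component_set K q \<subseteq> \<Gamma>"
proof -
  have lh: "local_homeo D f" using lcd by (rule local_C1_diffeo_imp_local_homeo)
  define \<sigma> where "\<sigma> = (\<lambda>s::real. y0 + s *\<^sub>R v)"
  define h where "h = (\<lambda>z. norm (f z - y0) / norm v)"
  have h_eq: "h z = s" if "f z = \<sigma> s" "0 \<le> s" for z s
    using that \<open>v \<noteq> 0\<close> unfolding h_def \<sigma>_def by simp
  have hK: "f z = \<sigma> (h z) \<and> 0 \<le> h z \<and> h z \<le> 1" if "z \<in> K" for z
    using closed_segment_parametrization[OF \<open>v \<noteq> 0\<close>, of "f z" y0] that
    unfolding K h_def \<sigma>_def by auto
  have ch: "continuous_on D h"
    unfolding h_def using local_homeo_imp_continuous_on[OF lh oD] \<open>v \<noteq> 0\<close>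
    by (intro continuous_intros) auto
  have "q \<in> B" using \<open>q \<in> K\<close> K by blast
  have fq: "f q = y0 + h q *\<^sub>R v" using hK[OF \<open>q \<in> K\<close>] unfolding \<sigma>_def by simp
  obtain a b \<Lambda> where ab: "0 \<le> a" "a \<le> h q" "h q \<le> b" "b \<le> 1"
    and \<Lambda>: "is_lifting f B \<sigma> {a..b} \<Lambda>" "\<Lambda> (h q) = q"
    and extend: "\<And>\<epsilon>. \<epsilon> > 0 \<Longrightarrow> \<exists>\<alpha> \<beta> \<Phi>. 0 \<le> \<alpha> \<and> \<alpha> \<le> a \<and> a - \<alpha> < \<epsilon> \<and> b \<le> \<beta> \<and> \<beta> - b < \<epsilon> \<and>
        \<beta> \<le> 1 \<and> is_lifting f D \<sigma> {\<alpha>..\<beta>} \<Phi> \<and> (\<forall>s\<in>{a..b}. \<Phi> s = \<Lambda> s) \<and>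
        (\<alpha> = 0 \<or> \<Phi> \<alpha> \<notin> B) \<and> (\<beta> = 1 \<or> \<Phi> \<beta> \<notin> B)"
    using maximal_lifting_on_segment[OF lcd oD BD cB M \<open>q \<in> B\<close> fq, folded \<sigma>_def] hK[OF \<open>q \<in> K\<close>]
    by blast
  have "connected_component_set K q \<subseteq> \<Lambda> ` {a..b}"
  proof
    fix z assume z: "z \<in> connected_component_set K q"
    then have "z \<in> K" using connected_component_subset by blast
    define d where "d = h z"
    \<comment> \<open>\<open>\<epsilon>\<close> is small enough that the extension \<open>\<Phi>\<close> does not reach a parameter \<open>d \<notin> [a,b]\<close>.\<close>
    define \<epsilon> where "\<epsilon> = (if b < d then d - b else if d < a then a - d else 1)"
    have "\<epsilon> > 0" unfolding \<epsilon>_def by auto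
    then obtain \<alpha> \<beta> \<Phi> where \<Phi>: "0 \<le> \<alpha>" "\<alpha> \<le> a" "a - \<alpha> < \<epsilon>" "b \<le> \<beta>" "\<beta> - b < \<epsilon>" "\<beta> \<le> 1"
        "is_lifting f D \<sigma> {\<alpha>..\<beta>} \<Phi>" "\<forall>s\<in>{a..b}. \<Phi> s = \<Lambda> s"
        "\<alpha> = 0 \<or> \<Phi> \<alpha> \<notin> B" "\<beta> = 1 \<or> \<Phi> \<beta> \<notin> B"
      using extend by blast
    have h\<Phi>: "h (\<Phi> s) = s" if "s \<in> {\<alpha>..\<beta>}" for s
      using h_eq \<Phi>(1,7) that unfolding is_lifting_def by auto
    have "q \<in> \<Phi> ` {\<alpha>..\<beta>}"
      using \<Lambda>(2) \<Phi>(2,4,8) ab by (metis atLeastAtMost_iff image_eqI order_trans)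
    then have "z \<in> \<Phi> ` {\<alpha>..\<beta>}"
      using connected_component_subset_lifting_image[OF local_homeo_imp_locally_inj_on[OF lh] oD ch
          \<Phi>(7) h\<Phi> _ BD hK \<Phi>(9,10) \<open>q \<in> K\<close>] K z by blast
    then obtain s where s: "s \<in> {\<alpha>..\<beta>}" "z = \<Phi> s" by blast
    then have "s = d" using h\<Phi> unfolding d_def by simp
    then have "d \<in> {a..b}" using s \<Phi>(3,5) unfolding \<epsilon>_def by (auto split: if_splits)
    then show "z \<in> \<Lambda> ` {a..b}" using s \<open>s = d\<close> \<Phi>(8) by auto
  qed
  moreover have "compact (\<Lambda> ` {a..b})"
    using \<Lambda>(1) unfolding is_lifting_def by (intro compact_continuous_image) auto
  ultimately show ?thesis using that by blast
qed

lemma cond_a2_imp_cond_b: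
  fixes f :: "'a::banach \<Rightarrow> 'b::real_normed_vector"
  assumes oD: "open D" and a2: "cond_a2 D f"
  shows "cond_b D f x0"
  unfolding cond_b_def
proof (intro allI impI ballI)
  fix B x C
  assume B: "closed B \<and> bounded_in D B" and "x \<in> B"
    and C: "C \<in> components {z \<in> B. f z \<in> closed_segment (f x0) (f x)}"
  define K where "K = {z \<in> B. f z \<in> closed_segment (f x0) (f x)}"
  have lcd: "local_C1_diffeo D f" using a2 unfolding cond_a2_def by blast
  have lh: "local_homeo D f" using lcd by (rule local_C1_diffeo_imp_local_homeo)
  have BD: "B \<subseteq> D" using B closure_subset unfolding bounded_in_def by blast
  obtain M where M: "\<And>z. z \<in> B \<Longrightarrow> onorm (inv (frechet_derivative f (at z))) \<le> M"
    using a2 B unfolding cond_a2_def bdd_above_def by fastforce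
  obtain q where "q \<in> K" and Cq: "C = connected_component_set K q"
    using C unfolding K_def by (rule componentsE)
  have "continuous_on B f"
    using local_homeo_imp_continuous_on[OF lh oD] BD by (rule continuous_on_subset)
  then have "closed (B \<inter> f -` closed_segment (f x0) (f x))"
    using B by (intro continuous_closed_preimage) auto
  moreover have "K = B \<inter> f -` closed_segment (f x0) (f x)" unfolding K_def by auto
  ultimately have "closed K" by simp
  then have "closed C"
    using closedin_component[OF C] unfolding K_def[symmetric] by (rule closedin_closed_trans[rotated])
  obtain \<Gamma> where "compact \<Gamma>" "C \<subseteq> \<Gamma>"
  proof (cases "f x = f x0")
    case True
    have "C = {q}"
    proof (rule locally_inj_on_constant_on_connected[OF local_homeo_imp_locally_inj_on[OF lh]])
      show "connected C" "q \<in> C" using Cq \<open>q \<in> K\<close> by auto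
      show "C \<subseteq> D" using Cq BD connected_component_subset unfolding K_def by blast
      show "f z = f q" if "z \<in> C" for z
        using that \<open>q \<in> K\<close> Cq True connected_component_subset unfolding K_def by fastforce
    qed
    then show ?thesis using that[of "{q}"] by simp
  next
    case False
    then have "f x - f x0 \<noteq> 0" by simp
    moreover have "K = {z \<in> B. f z \<in> closed_segment (f x0) (f x0 + (f x - f x0))}"
      unfolding K_def by simp
    ultimately show ?thesis
      using connected_component_preimage_segment_subset_compact[OF lcd oD BD _ M _ _ \<open>q \<in> K\<close>] B Cq that
      by blast
  qed
  then show "compact C"
    using \<open>closed C\<close> by (metis compact_Int_closed inf.absorb_iff2)
qed

theorem lemma2p3:
  fixes D :: "'a::banach set" and f :: "'a \<Rightarrow> 'b::banach" and x0 :: 'a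
  assumes "open D" and "connected D" and "D \<noteq> {}"
    and "local_homeo D f" and "x0 \<in> D"
  shows "(cond_a1 D f \<longrightarrow> cond_b D f x0)
       \<and> (cond_a2 D f \<longrightarrow> cond_b D f x0)
       \<and> (cond_b D f x0 \<longrightarrow> cond_c D f x0)
       \<and> ((\<exists>S::'a set. finite S \<and> span S = UNIV) \<longrightarrow>
            cond_a1 D f \<and> cond_b D f x0 \<and> cond_c D f x0 \<and>
            (local_C1_diffeo D f \<longrightarrow> cond_a2 D f))"
proof (intro conjI impI)
  show "cond_a1 D f \<Longrightarrow> cond_b D f x0" by (rule cond_a1_imp_cond_b)
  show "cond_a2 D f \<Longrightarrow> cond_b D f x0" by (rule cond_a2_imp_cond_b[OF assms(1)])
  show b_imp_c: "cond_b D f x0 \<Longrightarrow> cond_c D f x0" by (rule cond_b_imp_cond_c[OF assms(4,1)])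
  assume "\<exists>S::'a set. finite S \<and> span S = UNIV"
  then obtain S :: "'a set" where S: "finite S" "span S = UNIV" by blast
  show "cond_a1 D f" by (rule finite_span_imp_cond_a1[OF assms(4,1) S])
  then show "cond_b D f x0" by (rule cond_a1_imp_cond_b)
  then show "cond_c D f x0" by (rule b_imp_c)
  show "local_C1_diffeo D f \<Longrightarrow> cond_a2 D f" by (rule finite_span_imp_cond_a2[OF _ assms(1) S])
qed

end
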